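(* Consider the system of $n$ heterogeneous queues under the $k$-SLQ-$d$ policy described in the context, with $k\ge1$ and $d\in\{1,\dots,n-1\}$ fixed. The Markov chain $\{\mathbf X(t)\}_{t\ge0}$ is positive recurrent for every arrival rate $\lambda$ with $n\lambda<\sum_{l=1}^n\mu_l$ if and only if $$\sum_{l=1}^n\mu_l\ \ge\ (n-d)\max_{l\in[n]}\mu_l .$$
   Context: Model: time is discrete. There are $n$ FIFO single-server queues of infinite capacity; $Q_i(t)$ is the length of queue $i$ at the beginning of slot $t$. Jobs arrive as an i.i.d. process $\{A(t)\}$ with $\mathbb E[A(1)]=n\lambda$, $\mathrm{Var}(A(1))=n\sigma_\lambda^2$, $A(1)\le nA_{\max}$ a.s.; all jobs arriving in slot $t$ join a single queue chosen by the policy (indicator vector $\mathbf Y(t)$). Server $i$ has potential service $S_i(t)$, i.i.d. over time, independent of arrivals and queue lengths, with mean $\mu_i$, variance $\sigma_{\mu_i}^2$, $S_i(1)\le S_{\max}$, and $0<\mu_{\min}\le\mu_i\le\mu_{\max}$. Dynamics: $\mathbf Q(t+1)=[\mathbf Q(t)+A(t)\mathbf Y(t)-\mathbf S(t)]^+$. $[n]=\{1,\dots,n\}$. The $k$-SLQ-$d$ policy: at every slot $t$ that is a multiple of $k(n-d)$ the dispatcher observes $\mathbf Q(t)$ and finds the set $I_d(t)$ of the $d$ longest queues (ties broken uniformly at random); during the next $k(n-d)$ slots (including $t$) arrivals are dispatched Round-Robin over $[n]\setminus I_d(t)$, for $k$ rounds. The Markov chain is $\mathbf X(t)=(\mathbf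 Q(t),I_d(t),I_R(t),N_R(t))$, where $I_d(t)$ is the set computed at the last observation time, $I_R(t)$ is the queue receiving arrivals at slot $t$, and $N_R(t)\in\{0,\dots,k-1\}$ counts completed Round-Robin rounds since the last observation. *)

theory Defs
  imports "HOL-Probability.Probability"
begin

text \<open>prob_not_hit K C t x = P_x(X_1 \<notin> C, ..., X_t \<notin> C) = P_x(tau_C > t),
  where tau_C = min {s \<ge> 1. X_s \<in> C} is the hitting (return) time of C.\<close>
fun prob_not_hit :: "('s \<Rightarrow> 's pmf) \<Rightarrow> 's set \<Rightarrow> nat \<Rightarrow> 's \<Rightarrow> real" where
  "prob_not_hit K C 0 x = 1"
| "prob_not_hit K C (Suc t) x =
     measure_pmf.expectation (K x) (\<lambda>y. if y \<in> C then 0 else prob_not_hit K C t y)"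

text \<open>E_x[tau_C] = sum_t P_x(tau_C > t) is finite.\<close>
definition finite_mean_hitting_time :: "('s \<Rightarrow> 's pmf) \<Rightarrow> 's set \<Rightarrow> 's \<Rightarrow> bool" where
  "finite_mean_hitting_time K C x \<longleftrightarrow> summable (\<lambda>t. prob_not_hit K C t x)"

text \<open>Positive recurrence of a (possibly reducible) chain on the state space \<Omega>:
  there is a finite set of states that is reached (returned to) in finite
  expected time from every state.  For irreducible chains this is equivalent
  to positive recurrence of all states.\<close>
definition positive_recurrent_chain :: "'s set \<Rightarrow> ('s \<Rightarrow> 's pmf) \<Rightarrow> bool" where
  "positive_recurrent_chain \<Omega> K \<longleftrightarrow>
     (\<exists>C. finite C \<and> C \<subseteq> \<Omega> \<and> (\<forall>x\<in>\<Omega>. finite_mean_hitting_time K C x))"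

text \<open>Queues are indexed by {0..<n}.  State X = (Q, I_d, I_R, N_R).\<close>
type_synonym slq_state = "(nat \<Rightarrow> nat) \<times> nat set \<times> nat \<times> nat"

text \<open>Mean potential service of server i: mu_i.  S is the joint law of the
  service vector (S_1(t),...,S_n(t)).\<close>
definition svc_mean :: "(nat \<Rightarrow> nat) pmf \<Rightarrow> nat \<Rightarrow> real" where
  "svc_mean S i = measure_pmf.expectation S (\<lambda>s. real (s i))"

text \<open>Admissible choices of the set of the d longest queues; choosing uniformly
  among them = ties broken uniformly at random.\<close>
definition longest_sets :: "nat \<Rightarrow> nat \<Rightarrow> (nat \<Rightarrow> nat) \<Rightarrow> nat set set" where
  "longest_sets n d Q = {D. D \<subseteq> {0..<n} \<and> card D = d \<and>
       (\<forall>i\<in>D. \<forall>j\<in>{0..<n} - D. Q j \<le> Q i)}"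

definition slq_states :: "nat \<Rightarrow> nat \<Rightarrow> nat \<Rightarrow> slq_state set" where
  "slq_states n d k = {(Q, D, r, m). (\<forall>i\<ge>n. Q i = 0) \<and> D \<subseteq> {0..<n} \<and> card D = d \<and>
       r \<in> {0..<n} - D \<and> m < k}"

text \<open>One slot: arrivals a ~ A all join queue r = I_R(t); service vector s ~ S
  (independent); Q(t+1) = [Q(t) + a e_r - s]^+.  Then Round-Robin (in increasing
  index order) over [n] - I_d advances; after k complete rounds, i.e. k(n-d) slots,
  Q(t+1) is observed and a new set of d longest queues is drawn.\<close>
definition slq_step :: "nat \<Rightarrow> nat \<Rightarrow> nat \<Rightarrow> nat pmf \<Rightarrow> (nat \<Rightarrow> nat) pmf \<Rightarrow> slq_state \<Rightarrow> slq_state pmf" where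
  "slq_step n d k A S x = (case x of (Q, D, r, m) \<Rightarrow>
     do { a \<leftarrow> A; s \<leftarrow> S;
          let Q' = (\<lambda>i. if i < n then (Q i + (if i = r then a else 0)) - s i else 0);
          let R = {0..<n} - D;
          if (\<exists>j\<in>R. r < j) then return_pmf (Q', D, Min {j\<in>R. r < j}, m)
          else if Suc m < k then return_pmf (Q', D, Min R, Suc m)
          else do { D' \<leftarrow> pmf_of_set (longest_sets n d Q');
                    return_pmf (Q', D', Min ({0..<n} - D'), 0) } })"

definition slq_positive_recurrent :: "nat \<Rightarrow> nat \<Rightarrow> nat \<Rightarrow> nat pmf \<Rightarrow> (nat \<Rightarrow> nat) pmf \<Rightarrow> bool" where
  "slq_positive_recurrent n d k A S \<longleftrightarrow>
     positive_recurrent_chain (slq_states n d k) (slq_step n d k A S)"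

end

theory Submission
  imports Defs
begin

text \<open>
  Sufficiency is a Foster--Lyapunov argument.  If no server has more than a \<open>1/(n - d)\<close>
  share of the total capacity, then for every arrival rate below capacity there are
  \<open>\<theta>\<close> with \<open>(n - d) \<theta>\<close> above the arrival rate and \<open>\<delta> > 0\<close> such that
  \<open>\<delta> \<Sum>\<^sub>i Q\<^sub>i \<le> \<Sum>\<^sub>i \<mu>\<^sub>i Q\<^sub>i - \<theta> \<Sum>\<^bsub>i\<notin>D\<^esub> Q\<^sub>i\<close> whenever \<open>D\<close> holds the \<open>d\<close> longest queues.
  Adding to \<open>\<Sum>\<^sub>i Q\<^sub>i\<^sup>2\<close> the drift still due in the current frame, evaluated at the current
  queue lengths, gives a Lyapunov function whose drift is at most \<open>-2 \<delta> \<Sum>\<^sub>i Q\<^sub>i + const\<close>.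

  Necessity: if \<open>(n - d) \<mu>\<^sub>l > \<Sum>\<^sub>i \<mu>\<^sub>i\<close>, the other servers receive at least \<open>n - d - 1\<close> of
  every \<open>n - d\<close> routings, so a suitable arrival rate below capacity makes \<open>\<Sum>\<^bsub>i\<noteq>l\<^esub> Q\<^sub>i\<close>, corrected by
  the drift due in the current round, an unbounded submartingale with bounded increments;
  optional stopping then shows that no finite set is reached in finite mean time.
\<close>

section \<open>Criteria for positive recurrence\<close>

lemma expectation_bind_pmf_finite:
  fixes h :: "'b \<Rightarrow> real"
  assumes "finite (set_pmf p)" "\<And>x. x \<in> set_pmf p \<Longrightarrow> finite (set_pmf (f x))"
  shows "measure_pmf.expectation (p \<bind> f) h =
         measure_pmf.expectation p (\<lambda>x. measure_pmf.expectation (f x) h)"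
proof -
  have "measure_pmf.expectation (p \<bind> f) h =
      (\<Sum>a\<in>set_pmf p. pmf p a *\<^sub>R measure_pmf.expectation (f a) h)"
    using assms by (intro pmf_expectation_bind) auto
  also have "\<dots> = measure_pmf.expectation p (\<lambda>x. measure_pmf.expectation (f x) h)"
    using assms by (subst integral_measure_pmf_real[of "set_pmf p"]) (auto simp: mult.commute)
  finally show ?thesis .
qed

lemma expectation_mono_pmf_finite:
  fixes f g :: "'a \<Rightarrow> real"
  assumes "finite (set_pmf p)" "\<And>x. x \<in> set_pmf p \<Longrightarrow> f x \<le> g x"
  shows "measure_pmf.expectation p f \<le> measure_pmf.expectation p g"
  using assms by (intro integral_mono_AE) (auto simp: integrable_measure_pmf_finite AE_measure_pmf_iff)

lemma expectation_le_const_pmf_finite: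
  fixes f :: "'a \<Rightarrow> real"
  assumes "finite (set_pmf p)" "\<And>x. x \<in> set_pmf p \<Longrightarrow> f x \<le> c"
  shows "measure_pmf.expectation p f \<le> c"
  using expectation_mono_pmf_finite[of p f "\<lambda>_. c"] assms by simp

lemma expectation_ge_const_pmf_finite:
  fixes f :: "'a \<Rightarrow> real"
  assumes "finite (set_pmf p)" "\<And>x. x \<in> set_pmf p \<Longrightarrow> c \<le> f x"
  shows "c \<le> measure_pmf.expectation p f"
  using expectation_mono_pmf_finite[of p "\<lambda>_. c" f] assms by simp

lemma prob_not_hit_nonneg: "0 \<le> prob_not_hit K C t x"
  by (induction t arbitrary: x) (auto intro!: integral_nonneg_AE)

lemma positive_recurrent_chain_Foster:
  fixes K :: "'s \<Rightarrow> 's pmf" and U :: "'s \<Rightarrow> real"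
  assumes closed: "\<And>x. x \<in> \<Omega> \<Longrightarrow> set_pmf (K x) \<subseteq> \<Omega>"
    and fin: "\<And>x. x \<in> \<Omega> \<Longrightarrow> finite (set_pmf (K x))"
    and nonneg: "\<And>x. x \<in> \<Omega> \<Longrightarrow> 0 \<le> U x"
    and drift: "\<And>x. x \<in> \<Omega> \<Longrightarrow> x \<notin> C \<Longrightarrow> measure_pmf.expectation (K x) U \<le> U x - 1"
    and C: "finite C" "C \<subseteq> \<Omega>"
  shows "positive_recurrent_chain \<Omega> K"
  unfolding positive_recurrent_chain_def
proof (intro exI[of _ C] conjI ballI)
  show "finite C" "C \<subseteq> \<Omega>" by (fact C)+
  define P where "P N y = (\<Sum>t<N. prob_not_hit K C t y)" for N y
  have P_Suc: "P (Suc N) y = 1 + measure_pmf.expectation (K y) (\<lambda>z. if z \<in> C then 0 else P N z)"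
    if "y \<in> \<Omega>" for N y
  proof -
    have "P (Suc N) y = 1 + (\<Sum>t<N. prob_not_hit K C (Suc t) y)"
      unfolding P_def by (subst sum.lessThan_Suc_shift) simp
    also have "(\<Sum>t<N. prob_not_hit K C (Suc t) y) =
       measure_pmf.expectation (K y) (\<lambda>z. \<Sum>t<N. if z \<in> C then 0 else prob_not_hit K C t z)"
      using fin[OF that]
      by (simp add: Bochner_Integration.integral_sum integrable_measure_pmf_finite)
    also have "\<dots> = measure_pmf.expectation (K y) (\<lambda>z. if z \<in> C then 0 else P N z)"
      unfolding P_def by (intro Bochner_Integration.integral_cong) auto
    finally show ?thesis .
  qed
  have P_le_U: "P N y \<le> U y" if "y \<in> \<Omega>" "y \<notin> C" for N y
    using that
  proof (induction N arbitrary: y)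
    case 0
    then show ?case using nonneg by (simp add: P_def)
  next
    case (Suc N)
    have "measure_pmf.expectation (K y) (\<lambda>z. if z \<in> C then 0 else P N z)
        \<le> measure_pmf.expectation (K y) U"
      using Suc closed nonneg fin by (intro expectation_mono_pmf_finite) auto
    then show ?case using P_Suc[OF Suc.prems(1), of N] drift[OF Suc.prems] by simp
  qed
  fix x assume x: "x \<in> \<Omega>"
  show "finite_mean_hitting_time K C x"
    unfolding finite_mean_hitting_time_def
  proof (rule summableI_nonneg_bounded)
    show "0 \<le> prob_not_hit K C t x" for t by (rule prob_not_hit_nonneg)
    fix N
    have "P N x \<le> P (Suc N) x" unfolding P_def by (simp add: prob_not_hit_nonneg)
    also have "\<dots> \<le> 1 + measure_pmf.expectation (K x) U"
      using P_Suc[OF x] P_le_U closed[OF x] nonneg fin[OF x]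
      by (auto intro!: expectation_mono_pmf_finite)
    finally show "(\<Sum>i<N. prob_not_hit K C i x) \<le> 1 + measure_pmf.expectation (K x) U"
      by (simp add: P_def)
  qed
qed

text \<open>\<open>stopped_value K C V N x\<close> is \<open>E\<^sub>x V(X\<^bsub>min \<tau>\<^sub>C N\<^esub>)\<close>.\<close>
fun stopped_value :: "('s \<Rightarrow> 's pmf) \<Rightarrow> 's set \<Rightarrow> ('s \<Rightarrow> real) \<Rightarrow> nat \<Rightarrow> 's \<Rightarrow> real" where
  "stopped_value K C V 0 x = V x"
| "stopped_value K C V (Suc N) x =
     measure_pmf.expectation (K x) (\<lambda>y. if y \<in> C then V y else stopped_value K C V N y)"

lemma stopped_value_ge:
  assumes closed: "\<And>x. x \<in> \<Omega> \<Longrightarrow> set_pmf (K x) \<subseteq> \<Omega>"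
    and fin: "\<And>x. x \<in> \<Omega> \<Longrightarrow> finite (set_pmf (K x))"
    and submartingale: "\<And>x. x \<in> \<Omega> \<Longrightarrow> V x \<le> measure_pmf.expectation (K x) V"
    and "x \<in> \<Omega>"
  shows "V x \<le> stopped_value K C V N x"
  using \<open>x \<in> \<Omega>\<close>
proof (induction N arbitrary: x)
  case 0
  then show ?case by simp
next
  case (Suc N)
  have "measure_pmf.expectation (K x) V
      \<le> measure_pmf.expectation (K x) (\<lambda>y. if y \<in> C then V y else stopped_value K C V N y)"
    using Suc closed fin by (intro expectation_mono_pmf_finite) auto
  then show ?case using submartingale[OF Suc.prems] by simp
qed

lemma stopped_value_le:
  assumes closed: "\<And>x. x \<in> \<Omega> \<Longrightarrow> set_pmf (K x) \<subseteq> \<Omega>"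
    and fin: "\<And>x. x \<in> \<Omega> \<Longrightarrow> finite (set_pmf (K x))"
    and increment: "\<And>x y. x \<in> \<Omega> \<Longrightarrow> y \<in> set_pmf (K x) \<Longrightarrow> V y \<le> V x + B"
    and "0 \<le> M" and V_le_M: "\<And>y. y \<in> C \<Longrightarrow> V y \<le> M" and "x \<in> \<Omega>"
  shows "stopped_value K C V N x \<le> M + (V x + B * N) * prob_not_hit K C N x"
  using \<open>x \<in> \<Omega>\<close>
proof (induction N arbitrary: x)
  case 0
  then show ?case using \<open>0 \<le> M\<close> by simp
next
  case (Suc N)
  have "stopped_value K C V (Suc N) x \<le> measure_pmf.expectation (K x)
       (\<lambda>y. M + (V x + B * Suc N) * (if y \<in> C then 0 else prob_not_hit K C N y))"
    unfolding stopped_value.simps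
  proof (intro expectation_mono_pmf_finite[OF fin[OF Suc.prems]])
    fix y assume y: "y \<in> set_pmf (K x)"
    then have "y \<in> \<Omega>" using closed Suc.prems by auto
    have "(V y + B * N) * prob_not_hit K C N y \<le> (V x + B * Suc N) * prob_not_hit K C N y"
      using increment[OF Suc.prems y]
      by (intro mult_right_mono prob_not_hit_nonneg) (simp add: algebra_simps)
    then show "(if y \<in> C then V y else stopped_value K C V N y)
        \<le> M + (V x + B * Suc N) * (if y \<in> C then 0 else prob_not_hit K C N y)"
      using V_le_M Suc.IH[OF \<open>y \<in> \<Omega>\<close>] by auto
  qed
  also have "\<dots> = M + (V x + B * Suc N) * prob_not_hit K C (Suc N) x"
    using fin[OF Suc.prems] by (simp add: integrable_measure_pmf_finite del: of_nat_Suc)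
  finally show ?case .
qed

text \<open>By optional stopping, \<open>P\<^sub>x(\<tau>\<^sub>C > N)\<close> decays no faster than \<open>1/N\<close> from any
  state \<open>x\<close> with \<open>V x > max\<^sub>C V\<close>, so the mean return time to \<open>C\<close> is infinite.\<close>
lemma submartingale_not_positive_recurrent_chain:
  fixes K :: "'s \<Rightarrow> 's pmf" and V :: "'s \<Rightarrow> real"
  assumes closed: "\<And>x. x \<in> \<Omega> \<Longrightarrow> set_pmf (K x) \<subseteq> \<Omega>"
    and fin: "\<And>x. x \<in> \<Omega> \<Longrightarrow> finite (set_pmf (K x))"
    and submartingale: "\<And>x. x \<in> \<Omega> \<Longrightarrow> V x \<le> measure_pmf.expectation (K x) V"
    and increment: "\<And>x y. x \<in> \<Omega> \<Longrightarrow> y \<in> set_pmf (K x) \<Longrightarrow> V y \<le> V x + B"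
    and B: "0 \<le> B"
    and unbounded: "\<And>b. \<exists>x\<in>\<Omega>. b < V x"
  shows "\<not> positive_recurrent_chain \<Omega> K"
proof
  assume "positive_recurrent_chain \<Omega> K"
  then obtain C where "finite C"
    and hitting: "\<forall>x\<in>\<Omega>. finite_mean_hitting_time K C x"
    unfolding positive_recurrent_chain_def by blast
  define M where "M = Max (insert 0 (V ` C))"
  have "0 \<le> M" and V_le_M: "\<And>y. y \<in> C \<Longrightarrow> V y \<le> M"
    using \<open>finite C\<close> by (auto simp: M_def)
  obtain x where x: "x \<in> \<Omega>" "M < V x" using unbounded by blast
  define c where "c = (V x - M) / (V x + B)"
  have "0 < c" using x \<open>0 \<le> M\<close> B by (simp add: c_def)
  have harmonic_le: "c * inverse (real (Suc N)) \<le> prob_not_hit K C N x" for N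
  proof -
    have "V x \<le> stopped_value K C V N x"
      by (rule stopped_value_ge[OF closed fin submartingale x(1)])
    also have "\<dots> \<le> M + (V x + B * N) * prob_not_hit K C N x"
      by (rule stopped_value_le[OF closed fin increment \<open>0 \<le> M\<close> V_le_M x(1)])
    finally have "V x - M \<le> (V x + B * N) * prob_not_hit K C N x" by simp
    also have "\<dots> \<le> ((V x + B) * Suc N) * prob_not_hit K C N x"
      using x \<open>0 \<le> M\<close> B by (intro mult_right_mono prob_not_hit_nonneg) (auto simp: algebra_simps)
    finally have "V x - M \<le> ((V x + B) * Suc N) * prob_not_hit K C N x" .
    moreover have "0 < (V x + B) * Suc N" using x \<open>0 \<le> M\<close> B by simp
    ultimately show ?thesis
      unfolding c_def using x \<open>0 \<le> M\<close> B by (simp add: field_simps)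
  qed
  have "summable (\<lambda>N. prob_not_hit K C N x)"
    using hitting x(1) unfolding finite_mean_hitting_time_def by blast
  then have "summable (\<lambda>N. c * inverse (real (Suc N)))"
    using harmonic_le \<open>0 < c\<close>
    by (intro summable_comparison_test[of "\<lambda>N. c * inverse (real (Suc N))" "\<lambda>N. prob_not_hit K C N x"])
      (auto intro!: exI[of _ 0])
  then have "summable (\<lambda>N. inverse (real (Suc N)))"
    using \<open>0 < c\<close> summable_mult[of "\<lambda>N. c * inverse (real (Suc N))" "inverse c"] by simp
  then have "summable (\<lambda>N. inverse (real N))"
    using summable_Suc_iff[where f="\<lambda>N. inverse (real N)"] by simp
  then show False using not_summable_harmonic[where 'a=real] by simp
qed

section \<open>One slot of the k-SLQ-d chain\<close>

definition arrive_serve :: "nat \<Rightarrow> (nat \<Rightarrow> nat) \<Rightarrow> nat \<Rightarrow> nat \<Rightarrow> (nat \<Rightarrow> nat) \<Rightarrow> nat \<Rightarrow> nat" where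
  "arrive_serve n Q r a s = (\<lambda>i. if i < n then (Q i + (if i = r then a else 0)) - s i else 0)"

definition slq_slot ::
    "nat \<Rightarrow> nat \<Rightarrow> nat \<Rightarrow> (nat \<Rightarrow> nat) \<Rightarrow> nat set \<Rightarrow> nat \<Rightarrow> nat \<Rightarrow> nat \<Rightarrow> (nat \<Rightarrow> nat) \<Rightarrow> slq_state pmf" where
  "slq_slot n d k Q D r m a s =
    (let Q' = arrive_serve n Q r a s; R = {0..<n} - D in
     if \<exists>j\<in>R. r < j then return_pmf (Q', D, Min {j\<in>R. r < j}, m)
     else if Suc m < k then return_pmf (Q', D, Min R, Suc m)
     else pmf_of_set (longest_sets n d Q') \<bind> (\<lambda>D'. return_pmf (Q', D', Min ({0..<n} - D'), 0)))"

lemma slq_step_eq_bind: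
  "slq_step n d k A S (Q, D, r, m) = A \<bind> (\<lambda>a. S \<bind> (\<lambda>s. slq_slot n d k Q D r m a s))"
  unfolding slq_step_def slq_slot_def arrive_serve_def Let_def by simp

lemma finite_longest_sets: "finite (longest_sets n d Q)"
  by (rule finite_subset[of _ "Pow {0..<n}"]) (auto simp: longest_sets_def)

lemma card_complement: "D \<subseteq> {0..<n} \<Longrightarrow> card D = d \<Longrightarrow> card ({0..<n} - D) = n - d"
  by (simp add: card_Diff_subset finite_subset)

lemma longest_sets_nonempty: "d \<le> n \<Longrightarrow> longest_sets n d Q \<noteq> {}"
proof (induction d)
  case 0
  have "{} \<in> longest_sets n 0 Q" by (simp add: longest_sets_def)
  then show ?case by blast
next
  case (Suc d)
  then obtain D where D: "D \<in> longest_sets n d Q" by auto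
  then have D_sub: "D \<subseteq> {0..<n}" and D_card: "card D = d"
    and D_longest: "\<forall>i\<in>D. \<forall>j\<in>{0..<n} - D. Q j \<le> Q i"
    by (auto simp: longest_sets_def)
  define R where "R = {0..<n} - D"
  have "card R = n - d" using card_complement[OF D_sub D_card] by (simp add: R_def)
  then have "R \<noteq> {}" using Suc.prems by auto
  then have "Max (Q ` R) \<in> Q ` R" by (intro Max_in) (auto simp: R_def)
  then obtain j where j: "j \<in> R" "Q j = Max (Q ` R)" by auto
  have j_max: "Q i \<le> Q j" if "i \<in> R" for i
    using j that by (simp add: R_def)
  have "insert j D \<in> longest_sets n (Suc d) Q"
    unfolding longest_sets_def
  proof (intro CollectI conjI ballI)
    show "insert j D \<subseteq> {0..<n}" "card (insert j D) = Suc d"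
      using D_sub D_card j by (auto simp: R_def finite_subset)
    fix i i' assume "i \<in> insert j D" "i' \<in> {0..<n} - insert j D"
    then show "Q i' \<le> Q i"
      using D_longest j_max[of i'] by (auto simp: R_def)
  qed
  then show ?case by blast
qed

lemma set_pmf_slq_slotE:
  assumes "d \<le> n" "y \<in> set_pmf (slq_slot n d k Q D r m a s)"
  obtains (next_in_round) "\<exists>j\<in>{0..<n} - D. r < j"
      "y = (arrive_serve n Q r a s, D, Min {j\<in>{0..<n} - D. r < j}, m)"
  | (next_round) "\<not> (\<exists>j\<in>{0..<n} - D. r < j)" "Suc m < k"
      "y = (arrive_serve n Q r a s, D, Min ({0..<n} - D), Suc m)"
  | (new_frame) D' where "\<not> (\<exists>j\<in>{0..<n} - D. r < j)" "\<not> Suc m < k"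
      "D' \<in> longest_sets n d (arrive_serve n Q r a s)"
      "y = (arrive_serve n Q r a s, D', Min ({0..<n} - D'), 0)"
  using assms finite_longest_sets[of n d] longest_sets_nonempty[OF assms(1)]
  by (auto simp: slq_slot_def Let_def split: if_splits)

lemma finite_set_pmf_slq_slot: "d \<le> n \<Longrightarrow> finite (set_pmf (slq_slot n d k Q D r m a s))"
  using finite_longest_sets[of n d] longest_sets_nonempty[of d n]
  by (auto simp: slq_slot_def Let_def)

lemma set_pmf_slq_step:
  "set_pmf (slq_step n d k A S (Q, D, r, m)) =
     (\<Union>a\<in>set_pmf A. \<Union>s\<in>set_pmf S. set_pmf (slq_slot n d k Q D r m a s))"
  by (simp add: slq_step_eq_bind)

lemma finite_set_pmf_slq_step:
  assumes "finite (set_pmf A)" "finite (set_pmf S)" "d \<le> n"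
  shows "finite (set_pmf (slq_step n d k A S x))"
  using assms finite_set_pmf_slq_slot[OF assms(3)] by (cases x) (auto simp: set_pmf_slq_step)

lemma slq_step_closed:
  assumes "d < n" "1 \<le> k" "x \<in> slq_states n d k"
  shows "set_pmf (slq_step n d k A S x) \<subseteq> slq_states n d k"
proof
  fix y assume y: "y \<in> set_pmf (slq_step n d k A S x)"
  obtain Q D r m where x: "x = (Q, D, r, m)" by (cases x)
  with assms have D: "D \<subseteq> {0..<n}" "card D = d" and "m < k"
    by (auto simp: slq_states_def)
  from y x obtain a s where y: "y \<in> set_pmf (slq_slot n d k Q D r m a s)"
    by (auto simp: set_pmf_slq_step)
  have Min_in_complement: "Min ({0..<n} - D') \<in> {0..<n} - D'"
    if "D' \<subseteq> {0..<n}" "card D' = d" for D'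
  proof -
    have "card ({0..<n} - D') = n - d" using card_complement[OF that] .
    then have "{0..<n} - D' \<noteq> {}" using assms(1) by (intro notI) simp
    then show ?thesis by (intro Min_in) auto
  qed
  have "\<forall>i\<ge>n. arrive_serve n Q r a s i = 0" by (simp add: arrive_serve_def)
  from less_imp_le[OF assms(1)] y show "y \<in> slq_states n d k"
  proof (cases rule: set_pmf_slq_slotE)
    case next_in_round
    then have "Min {j \<in> {0..<n} - D. r < j} \<in> {j \<in> {0..<n} - D. r < j}"
      by (intro Min_in) auto
    then show ?thesis
      using next_in_round \<open>\<forall>i\<ge>n. _\<close> D \<open>m < k\<close> by (auto simp: slq_states_def)
  next
    case next_round
    then show ?thesis
      using Min_in_complement[OF D] \<open>\<forall>i\<ge>n. _\<close> D by (auto simp: slq_states_def)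
  next
    case (new_frame D')
    then have "D' \<subseteq> {0..<n}" "card D' = d" by (auto simp: longest_sets_def)
    then show ?thesis
      using new_frame Min_in_complement \<open>\<forall>i\<ge>n. _\<close> assms(2) by (auto simp: slq_states_def)
  qed
qed

lemma expectation_slq_step:
  fixes h :: "slq_state \<Rightarrow> real"
  assumes "finite (set_pmf A)" "finite (set_pmf S)" "d \<le> n"
  shows "measure_pmf.expectation (slq_step n d k A S (Q, D, r, m)) h =
     measure_pmf.expectation A (\<lambda>a. measure_pmf.expectation S (\<lambda>s.
        measure_pmf.expectation (slq_slot n d k Q D r m a s) h))"
  unfolding slq_step_eq_bind using assms finite_set_pmf_slq_slot[OF assms(3)]
  by (subst expectation_bind_pmf_finite) (auto simp: expectation_bind_pmf_finite)

lemma expectation_affine_arrival_service: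
  assumes "finite (set_pmf A)" "finite (set_pmf S)"
  shows "measure_pmf.expectation A (\<lambda>a. measure_pmf.expectation S
           (\<lambda>s. c0 + c1 * real a + (\<Sum>i<n. c2 i * real (s i))))
       = c0 + c1 * measure_pmf.expectation A real + (\<Sum>i<n. c2 i * svc_mean S i)"
  using assms
  by (simp add: integrable_measure_pmf_finite Bochner_Integration.integral_sum svc_mean_def)

lemma expectation_slq_step_le_affine:
  assumes fin: "finite (set_pmf A)" "finite (set_pmf S)" "d \<le> n"
    and bound: "\<And>a s y. a \<in> set_pmf A \<Longrightarrow> s \<in> set_pmf S \<Longrightarrow>
       y \<in> set_pmf (slq_slot n d k Q D r m a s) \<Longrightarrow>
       h y \<le> c0 + c1 * real a + (\<Sum>i<n. c2 i * real (s i))"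
  shows "measure_pmf.expectation (slq_step n d k A S (Q, D, r, m)) h
      \<le> c0 + c1 * measure_pmf.expectation A real + (\<Sum>i<n. c2 i * svc_mean S i)"
proof -
  have "measure_pmf.expectation (slq_step n d k A S (Q, D, r, m)) h
      \<le> measure_pmf.expectation A (\<lambda>a. measure_pmf.expectation S
           (\<lambda>s. c0 + c1 * real a + (\<Sum>i<n. c2 i * real (s i))))"
    unfolding expectation_slq_step[OF fin] using fin finite_set_pmf_slq_slot bound
    by (intro expectation_mono_pmf_finite expectation_le_const_pmf_finite) auto
  then show ?thesis
    by (simp only: expectation_affine_arrival_service[OF fin(1,2)])
qed

lemma expectation_slq_step_ge_affine:
  assumes fin: "finite (set_pmf A)" "finite (set_pmf S)" "d \<le> n"
    and bound: "\<And>a s y. a \<in> set_pmf A \<Longrightarrow> s \<in> set_pmf S \<Longrightarrow>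
       y \<in> set_pmf (slq_slot n d k Q D r m a s) \<Longrightarrow>
       c0 + c1 * real a + (\<Sum>i<n. c2 i * real (s i)) \<le> h y"
  shows "c0 + c1 * measure_pmf.expectation A real + (\<Sum>i<n. c2 i * svc_mean S i)
      \<le> measure_pmf.expectation (slq_step n d k A S (Q, D, r, m)) h"
proof -
  have "measure_pmf.expectation A (\<lambda>a. measure_pmf.expectation S
           (\<lambda>s. c0 + c1 * real a + (\<Sum>i<n. c2 i * real (s i))))
      \<le> measure_pmf.expectation (slq_step n d k A S (Q, D, r, m)) h"
    unfolding expectation_slq_step[OF fin] using fin finite_set_pmf_slq_slot bound
    by (intro expectation_mono_pmf_finite expectation_ge_const_pmf_finite) auto
  then show ?thesis
    by (simp only: expectation_affine_arrival_service[OF fin(1,2)])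
qed

lemma arrive_serve_ge:
  "i < n \<Longrightarrow> real (Q i) + (if i = r then real a else 0) - real (s i) \<le> real (arrive_serve n Q r a s i)"
  by (cases "s i \<le> Q i + (if i = r then a else 0)") (auto simp: arrive_serve_def of_nat_diff)

lemma arrive_serve_le:
  "real (arrive_serve n Q r a s i) \<le> real (Q i) + (if i = r then real a else 0)"
  by (cases "s i \<le> Q i + (if i = r then a else 0)") (auto simp: arrive_serve_def of_nat_diff)

lemma arrive_serve_dist_le:
  assumes "a \<le> Amax" "\<forall>i<n. s i \<le> Smax"
  shows "\<forall>i<n. \<bar>real (arrive_serve n Q r a s i) - real (Q i)\<bar> \<le> real (Amax + Smax)"
  using arrive_serve_ge[of _ n Q r a s] arrive_serve_le[of n Q r a s] assms
  by (force simp: abs_le_iff split: if_splits)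

text \<open>The truncation at \<open>0\<close> only helps: a queue that empties had \<open>q < \<sigma>\<close>.\<close>
lemma square_truncated_step_le:
  fixes q e \<sigma> M :: real
  assumes "0 \<le> q" "0 \<le> e" "e \<le> M" "0 \<le> \<sigma>" "\<sigma> \<le> M"
  shows "(max (q + e - \<sigma>) 0)\<^sup>2 \<le> q\<^sup>2 + M\<^sup>2 + 2 * q * e - 2 * q * \<sigma>"
proof (cases "\<sigma> \<le> q + e")
  case True
  have "\<bar>e - \<sigma>\<bar> \<le> M" using assms by (auto simp: abs_le_iff)
  then have "(e - \<sigma>)\<^sup>2 \<le> M\<^sup>2" by (metis abs_ge_zero power2_abs power_mono)
  then show ?thesis using True by (simp add: power2_eq_square algebra_simps)
next
  case False
  then have "0 \<le> (q - \<sigma>)\<^sup>2 + (M\<^sup>2 - \<sigma>\<^sup>2) + 2 * q * e"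
    using assms by (intro add_nonneg_nonneg mult_nonneg_nonneg) (auto intro: power_mono)
  then show ?thesis using False by (simp add: power2_eq_square algebra_simps)
qed

lemma sum_squares_arrive_serve_le:
  assumes "a \<le> Amax" "\<forall>i<n. s i \<le> Smax" and "r < n"
  shows "(\<Sum>i<n. (real (arrive_serve n Q r a s i))\<^sup>2)
     \<le> (\<Sum>i<n. (real (Q i))\<^sup>2) + real n * (real (Amax + Smax))\<^sup>2
        + 2 * real (Q r) * real a - 2 * (\<Sum>i<n. real (Q i) * real (s i))"
proof -
  define M where "M = real (Amax + Smax)"
  have slot: "(real (arrive_serve n Q r a s i))\<^sup>2
      \<le> (real (Q i))\<^sup>2 + M\<^sup>2 + 2 * real (Q i) * (if i = r then real a else 0)
         - 2 * real (Q i) * real (s i)" if "i < n" for i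
  proof -
    define e where "e = (if i = r then real a else 0)"
    have "0 \<le> e" "e \<le> M" "real (s i) \<le> M" using assms that by (auto simp: e_def M_def)
    moreover have "real (arrive_serve n Q r a s i) = max (real (Q i) + e - real (s i)) 0"
      using that by (auto simp: arrive_serve_def of_nat_diff e_def)
    ultimately show ?thesis
      unfolding e_def[symmetric] using square_truncated_step_le[of "real (Q i)" e M "real (s i)"] by simp
  qed
  have "(\<Sum>i<n. (real (arrive_serve n Q r a s i))\<^sup>2)
      \<le> (\<Sum>i<n. (real (Q i))\<^sup>2 + M\<^sup>2 + 2 * real (Q i) * (if i = r then real a else 0)
           - 2 * real (Q i) * real (s i))"
    using slot by (intro sum_mono) auto
  also have "\<dots> = (\<Sum>i<n. (real (Q i))\<^sup>2) + real n * M\<^sup>2 + 2 * real (Q r) * real a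
      - 2 * (\<Sum>i<n. real (Q i) * real (s i))"
    using \<open>r < n\<close>
    by (simp add: sum.distrib sum_subtractf sum_distrib_left if_distrib[of "\<lambda>x. _ * x"] sum.delta mult.assoc)
  finally show ?thesis by (simp add: M_def)
qed

definition round_remainder :: "nat set \<Rightarrow> nat \<Rightarrow> nat set" where
  "round_remainder R r = {j\<in>R. r \<le> j}"

lemma round_remainder_current: "r \<in> R \<Longrightarrow> round_remainder R r = insert r {j\<in>R. r < j}"
  by (auto simp: round_remainder_def)

lemma round_remainder_next:
  assumes "finite R" "\<exists>j\<in>R. r < j"
  shows "round_remainder R (Min {j\<in>R. r < j}) = {j\<in>R. r < j}"
proof -
  have "Min {j\<in>R. r < j} \<in> {j\<in>R. r < j}" using assms by (intro Min_in) auto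
  then show ?thesis using assms(1) by (auto simp: round_remainder_def intro: Min_le)
qed

lemma round_remainder_last: "r \<in> R \<Longrightarrow> \<not> (\<exists>j\<in>R. r < j) \<Longrightarrow> round_remainder R r = {r}"
  by (auto simp: round_remainder_def not_less)

lemma round_remainder_Min: "finite R \<Longrightarrow> round_remainder R (Min R) = R"
  by (auto simp: round_remainder_def)

lemma sum_subset_atLeast0LessThan_le:
  fixes f :: "nat \<Rightarrow> real"
  assumes "X \<subseteq> {0..<n}" "\<forall>j<n. f j \<le> b" "0 \<le> b"
  shows "(\<Sum>j\<in>X. f j) \<le> real n * b"
proof -
  have "(\<Sum>j\<in>X. f j) \<le> real (card X) * b"
    using assms(1,2) by (intro sum_bounded_above) auto
  also have "\<dots> \<le> real n * b"
    using card_mono[OF _ assms(1)] assms(3) by (intro mult_right_mono) auto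
  finally show ?thesis .
qed

lemma finite_set_pmf_bounded_nat: "\<forall>a\<in>set_pmf A. a \<le> (Amax :: nat) \<Longrightarrow> finite (set_pmf A)"
  by (rule finite_subset[of _ "{..Amax}"]) auto

lemma svc_mean_nonneg: "0 \<le> svc_mean S i"
  by (simp add: svc_mean_def)

section \<open>Instability when one server dominates\<close>

lemma sum_lessThan_if_neq:
  fixes f :: "nat \<Rightarrow> real"
  shows "(\<Sum>i<n. (if i \<noteq> l then c else 0) * f i) = c * (\<Sum>i\<in>{..<n}-{l}. f i)"
proof -
  have "(\<Sum>i<n. (if i \<noteq> l then c else 0) * f i) = (\<Sum>i<n. if i \<in> {..<n}-{l} then c * f i else 0)"
    by (intro sum.cong) auto
  also have "\<dots> = (\<Sum>i\<in>{..<n}-{l}. c * f i)"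
    by (subst sum.inter_restrict[symmetric]) (auto intro!: sum.cong)
  finally show ?thesis by (simp add: sum_distrib_left)
qed

text \<open>Fix a server \<open>l\<close> and write \<open>\<sigma> = \<Sum>\<^bsub>i\<noteq>l\<^esub> \<mu>\<^sub>i\<close>.  A slot routing to \<open>j\<close> changes
  \<open>\<Sum>\<^bsub>i\<noteq>l\<^esub> Q\<^sub>i\<close> in mean by at least \<open>drift_except p \<sigma> l j\<close>; \<open>load_except\<close> adds the
  drift still due in the current round, so that it is a submartingale as soon as a full
  round has nonnegative total drift.\<close>
definition drift_except :: "real \<Rightarrow> real \<Rightarrow> nat \<Rightarrow> nat \<Rightarrow> real" where
  "drift_except p \<sigma> l j = (if j \<noteq> l then p else 0) - \<sigma>"

definition load_except :: "nat \<Rightarrow> nat \<Rightarrow> real \<Rightarrow> real \<Rightarrow> slq_state \<Rightarrow> real" where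
  "load_except n l p \<sigma> x = (case x of (Q, D, r, m) \<Rightarrow>
     (\<Sum>i\<in>{..<n}-{l}. real (Q i)) + (\<Sum>j\<in>round_remainder ({0..<n} - D) r. drift_except p \<sigma> l j))"

lemma sum_drift_except_round_nonneg:
  assumes "D \<subseteq> {0..<n}" "card D = d" "0 \<le> p"
    and balance: "real (n - d) * \<sigma> \<le> (real (n - d) - 1) * p"
  shows "0 \<le> (\<Sum>j\<in>{0..<n} - D. drift_except p \<sigma> l j)"
proof -
  let ?R = "{0..<n} - D"
  have "real (card ?R) - 1 \<le> real (card (?R - {l}))"
    by (cases "l \<in> ?R") (auto simp: card_Diff_singleton_if of_nat_diff)
  then have "(real (card ?R) - 1) * p \<le> real (card (?R - {l})) * p"
    using \<open>0 \<le> p\<close> by (intro mult_right_mono) auto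
  moreover have "(\<Sum>j\<in>?R. drift_except p \<sigma> l j) = real (card (?R - {l})) * p - real (card ?R) * \<sigma>"
  proof -
    have "?R \<inter> {j. j \<noteq> l} = ?R - {l}" by auto
    then show ?thesis by (simp add: drift_except_def sum_subtractf sum.If_cases)
  qed
  ultimately show ?thesis
    using balance card_complement[OF assms(1,2)] by simp
qed

lemma abs_sum_drift_except_le:
  assumes "0 \<le> p" "0 \<le> \<sigma>" "X \<subseteq> {0..<n}"
  shows "\<bar>\<Sum>j\<in>X. drift_except p \<sigma> l j\<bar> \<le> real n * (p + \<sigma>)"
proof -
  have "\<forall>j<n. \<bar>drift_except p \<sigma> l j\<bar> \<le> p + \<sigma>" using assms(1,2) by (auto simp: drift_except_def)
  then have "(\<Sum>j\<in>X. \<bar>drift_except p \<sigma> l j\<bar>) \<le> real n * (p + \<sigma>)"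
    using sum_subset_atLeast0LessThan_le[OF assms(3)] assms(1,2) by simp
  then show ?thesis by (rule order_trans[OF sum_abs])
qed

lemma load_except_slot:
  assumes "d < n" "(Q, D, r, m) \<in> slq_states n d k" "0 \<le> p"
    and balance: "real (n - d) * \<sigma> \<le> (real (n - d) - 1) * p"
    and y: "y \<in> set_pmf (slq_slot n d k Q D r m a s)"
  shows "load_except n l p \<sigma> y
     \<ge> (\<Sum>i\<in>{..<n}-{l}. real (arrive_serve n Q r a s i))
        + (\<Sum>j\<in>round_remainder ({0..<n} - D) r. drift_except p \<sigma> l j) - drift_except p \<sigma> l r"
proof -
  let ?R = "{0..<n} - D"
  have D: "D \<subseteq> {0..<n}" "card D = d" and r: "r \<in> ?R"
    using assms(2) by (auto simp: slq_states_def)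
  have round_nonneg: "0 \<le> (\<Sum>j\<in>round_remainder ({0..<n} - D') (Min ({0..<n} - D')). drift_except p \<sigma> l j)"
    if "D' \<subseteq> {0..<n}" "card D' = d" for D'
    using sum_drift_except_round_nonneg[OF that \<open>0 \<le> p\<close> balance] by (simp add: round_remainder_Min)
  from less_imp_le[OF \<open>d < n\<close>] y show ?thesis
  proof (cases rule: set_pmf_slq_slotE)
    case next_in_round
    have "round_remainder ?R (Min {j\<in>?R. r < j}) = {j\<in>?R. r < j}"
      using next_in_round(1) by (intro round_remainder_next) auto
    then show ?thesis
      using next_in_round(2) r by (simp add: load_except_def round_remainder_current)
  next
    case next_round
    then show ?thesis
      using r round_nonneg[OF D] by (simp add: load_except_def round_remainder_last)
  next
    case (new_frame D')
    then have "D' \<subseteq> {0..<n}" "card D' = d" by (auto simp: longest_sets_def)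
    then show ?thesis
      using new_frame r round_nonneg by (simp add: load_except_def round_remainder_last)
  qed
qed

lemma load_except_submartingale:
  assumes "d < n" and fin: "finite (set_pmf A)" "finite (set_pmf S)"
    and x: "x \<in> slq_states n d k"
    and p: "p = measure_pmf.expectation A real" and \<sigma>: "\<sigma> = (\<Sum>i\<in>{..<n}-{l}. svc_mean S i)"
    and balance: "real (n - d) * \<sigma> \<le> (real (n - d) - 1) * p"
  shows "load_except n l p \<sigma> x \<le> measure_pmf.expectation (slq_step n d k A S x) (load_except n l p \<sigma>)"
proof -
  obtain Q D r m where x_eq: "x = (Q, D, r, m)" by (cases x)
  have "r < n" using x x_eq by (auto simp: slq_states_def)
  have "0 \<le> p" by (simp add: p)
  define I where "I = {..<n}-{l}"
  let ?pending = "\<Sum>j\<in>round_remainder ({0..<n} - D) r. drift_except p \<sigma> l j"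
  let ?c1 = "if r \<noteq> l then 1 else (0::real)"
  let ?c2 = "\<lambda>i. if i \<noteq> l then -1 else (0::real)"
  have "(\<Sum>i\<in>I. real (Q i)) + ?pending - drift_except p \<sigma> l r + ?c1 * measure_pmf.expectation A real
        + (\<Sum>i<n. ?c2 i * svc_mean S i)
      \<le> measure_pmf.expectation (slq_step n d k A S (Q, D, r, m)) (load_except n l p \<sigma>)"
  proof (rule expectation_slq_step_ge_affine[OF fin less_imp_le[OF \<open>d < n\<close>]])
    fix a s y assume "y \<in> set_pmf (slq_slot n d k Q D r m a s)"
    from load_except_slot[OF \<open>d < n\<close> x[unfolded x_eq] \<open>0 \<le> p\<close> balance this]
    have "(\<Sum>i\<in>I. real (arrive_serve n Q r a s i)) + ?pending - drift_except p \<sigma> l r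
        \<le> load_except n l p \<sigma> y" by (simp add: I_def)
    moreover have "(\<Sum>i\<in>I. real (Q i)) + ?c1 * real a - (\<Sum>i\<in>I. real (s i))
        \<le> (\<Sum>i\<in>I. real (arrive_serve n Q r a s i))"
      using sum_mono[of I _ "\<lambda>i. real (arrive_serve n Q r a s i)", OF arrive_serve_ge] \<open>r < n\<close>
      by (auto simp: I_def sum.distrib sum_subtractf)
    moreover have "(\<Sum>i<n. ?c2 i * real (s i)) = - (\<Sum>i\<in>I. real (s i))"
      using sum_lessThan_if_neq[of l "-1"] by (simp add: I_def)
    ultimately show "(\<Sum>i\<in>I. real (Q i)) + ?pending - drift_except p \<sigma> l r + ?c1 * real a
        + (\<Sum>i<n. ?c2 i * real (s i)) \<le> load_except n l p \<sigma> y"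
      by linarith
  qed
  moreover have "(\<Sum>i<n. ?c2 i * svc_mean S i) = - \<sigma>"
    using sum_lessThan_if_neq[of l "-1"] by (simp add: \<sigma>)
  ultimately show ?thesis
    using \<open>r < n\<close> by (simp add: x_eq load_except_def drift_except_def I_def p[symmetric] split: if_splits)
qed

lemma load_except_increment_le:
  assumes "d < n" "0 \<le> p" "0 \<le> \<sigma>" and Amax: "\<forall>a\<in>set_pmf A. a \<le> Amax"
    and y: "y \<in> set_pmf (slq_step n d k A S x)"
  shows "load_except n l p \<sigma> y \<le> load_except n l p \<sigma> x + (real Amax + 2 * (real n * (p + \<sigma>)))"
proof -
  define I where "I = {..<n}-{l}"
  obtain Q D r m where x_eq: "x = (Q, D, r, m)" by (cases x)
  obtain a s where "a \<in> set_pmf A" and y_slot: "y \<in> set_pmf (slq_slot n d k Q D r m a s)"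
    using y by (auto simp: x_eq set_pmf_slq_step)
  obtain D' r' m' where y_eq: "y = (arrive_serve n Q r a s, D', r', m')"
    using less_imp_le[OF \<open>d < n\<close>] y_slot by (cases rule: set_pmf_slq_slotE) auto
  have pending_bound: "\<bar>\<Sum>j\<in>round_remainder ({0..<n} - D) r. drift_except p \<sigma> l j\<bar> \<le> real n * (p + \<sigma>)"
    for D r by (intro abs_sum_drift_except_le[OF \<open>0 \<le> p\<close> \<open>0 \<le> \<sigma>\<close>]) (auto simp: round_remainder_def)
  have "(\<Sum>i\<in>I. real (arrive_serve n Q r a s i)) \<le> (\<Sum>i\<in>I. real (Q i) + (if i = r then real a else 0))"
    by (intro sum_mono arrive_serve_le)
  also have "\<dots> \<le> (\<Sum>i\<in>I. real (Q i)) + real Amax"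
    using Amax \<open>a \<in> set_pmf A\<close> by (simp add: sum.distrib sum.delta I_def)
  finally show ?thesis
    using pending_bound[of D' r'] pending_bound[of D r]
    by (simp add: load_except_def x_eq y_eq I_def abs_le_iff)
qed

lemma load_except_unbounded:
  assumes "1 \<le> k" "d < n" "j < n" "j \<noteq> l" "0 \<le> p" "0 \<le> \<sigma>"
  shows "\<exists>x\<in>slq_states n d k. b < load_except n l p \<sigma> x"
proof
  define N :: nat where "N = nat \<lceil>b + real n * (p + \<sigma>)\<rceil> + 1"
  define Q where "Q = (\<lambda>i. if i = j then N else 0)"
  show "(Q, {0..<d}, d, 0) \<in> slq_states n d k"
    using assms by (auto simp: slq_states_def Q_def)
  have "(\<Sum>i\<in>{..<n}-{l}. real (Q i)) = (\<Sum>i\<in>{..<n}-{l}. if i = j then real N else 0)"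
    by (intro sum.cong) (auto simp: Q_def)
  then have "(\<Sum>i\<in>{..<n}-{l}. real (Q i)) = real N"
    using assms by simp
  moreover have "\<bar>\<Sum>j\<in>round_remainder ({0..<n} - {0..<d}) d. drift_except p \<sigma> l j\<bar> \<le> real n * (p + \<sigma>)"
    using assms by (intro abs_sum_drift_except_le) (auto simp: round_remainder_def)
  ultimately show "b < load_except n l p \<sigma> (Q, {0..<d}, d, 0)"
    unfolding load_except_def N_def by (simp add: abs_le_iff) linarith
qed

lemma slq_not_positive_recurrent_if_balance:
  assumes "1 \<le> k" "d < n" and fin_S: "finite (set_pmf S)"
    and Amax: "\<forall>a\<in>set_pmf A. a \<le> Amax"
    and "l < n" "j < n" "j \<noteq> l"
    and balance: "real (n - d) * (\<Sum>i\<in>{..<n}-{l}. svc_mean S i)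
       \<le> (real (n - d) - 1) * measure_pmf.expectation A real"
  shows "\<not> slq_positive_recurrent n d k A S"
proof -
  define p where "p = measure_pmf.expectation A real"
  define \<sigma> where "\<sigma> = (\<Sum>i\<in>{..<n}-{l}. svc_mean S i)"
  have fin_A: "finite (set_pmf A)" using finite_set_pmf_bounded_nat[OF Amax] .
  have "0 \<le> p" "0 \<le> \<sigma>" by (simp_all add: p_def \<sigma>_def svc_mean_nonneg sum_nonneg)
  show ?thesis unfolding slq_positive_recurrent_def
  proof (rule submartingale_not_positive_recurrent_chain[where V = "load_except n l p \<sigma>"])
    show "set_pmf (slq_step n d k A S x) \<subseteq> slq_states n d k" if "x \<in> slq_states n d k" for x
      using slq_step_closed[OF assms(2,1) that] .
    show "finite (set_pmf (slq_step n d k A S x))" for x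
      using finite_set_pmf_slq_step[OF fin_A fin_S] assms(2) by simp
    show "load_except n l p \<sigma> x \<le> measure_pmf.expectation (slq_step n d k A S x) (load_except n l p \<sigma>)"
      if "x \<in> slq_states n d k" for x
      using load_except_submartingale[OF assms(2) fin_A fin_S that p_def \<sigma>_def] balance
      by (simp add: p_def \<sigma>_def)
    show "load_except n l p \<sigma> y \<le> load_except n l p \<sigma> x + (real Amax + 2 * (real n * (p + \<sigma>)))"
      if "y \<in> set_pmf (slq_step n d k A S x)" for x y
      using load_except_increment_le[OF assms(2) \<open>0 \<le> p\<close> \<open>0 \<le> \<sigma>\<close> Amax that] .
    show "0 \<le> real Amax + 2 * (real n * (p + \<sigma>))" using \<open>0 \<le> p\<close> \<open>0 \<le> \<sigma>\<close> by simp
    show "\<exists>x\<in>slq_states n d k. b < load_except n l p \<sigma> x" for b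
      using load_except_unbounded[OF assms(1,2,6,7) \<open>0 \<le> p\<close> \<open>0 \<le> \<sigma>\<close>] .
  qed
qed

lemma bounded_nat_pmf_with_mean_exists:
  fixes p :: real
  assumes "0 \<le> p"
  obtains A :: "nat pmf" and Amax where "\<forall>a\<in>set_pmf A. a \<le> Amax" "measure_pmf.expectation A real = p"
proof
  define a\<^sub>0 :: nat where "a\<^sub>0 = nat \<lceil>p\<rceil> + 1"
  have "p \<le> real a\<^sub>0" "0 < real a\<^sub>0" unfolding a\<^sub>0_def by linarith+
  define A where "A = map_pmf (\<lambda>b. if b then a\<^sub>0 else 0) (bernoulli_pmf (p / real a\<^sub>0))"
  show "\<forall>a\<in>set_pmf A. a \<le> a\<^sub>0" by (auto simp: A_def)
  show "measure_pmf.expectation A real = p"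
    using assms \<open>p \<le> real a\<^sub>0\<close> \<open>0 < real a\<^sub>0\<close> by (simp add: A_def)
qed

text \<open>The arrival rate \<open>p = (n - d) \<sigma> / (n - d - 1)\<close>, \<open>\<sigma> = \<Sum>\<^bsub>i\<noteq>l\<^esub> \<mu>\<^sub>i\<close>, gives a full round
  zero drift for \<open>\<Sum>\<^bsub>i\<noteq>l\<^esub> Q\<^sub>i\<close>; it lies below capacity exactly when server \<open>l\<close> dominates.\<close>
lemma slq_not_positive_recurrent_if_dominant_server:
  assumes "1 \<le> k" "1 \<le> d" "d < n" and fin_S: "finite (set_pmf S)"
    and \<mu>_pos: "\<forall>i<n. 0 < svc_mean S i"
    and "l < n" and dominant: "(\<Sum>i<n. svc_mean S i) < real (n - d) * svc_mean S l"
  obtains A :: "nat pmf" and Amax where "\<forall>a\<in>set_pmf A. a \<le> Amax"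
    "measure_pmf.expectation A real < (\<Sum>i<n. svc_mean S i)" "\<not> slq_positive_recurrent n d k A S"
proof -
  define \<sigma> where "\<sigma> = (\<Sum>i\<in>{..<n}-{l}. svc_mean S i)"
  have total: "(\<Sum>i<n. svc_mean S i) = svc_mean S l + \<sigma>"
    using \<open>l < n\<close> by (simp add: \<sigma>_def sum.remove[of "{..<n}" l])
  obtain j where "j < n" "j \<noteq> l"
  proof
    show "(if l = 0 then 1 else 0) < n" "(if l = 0 then 1 else 0) \<noteq> l" using assms(2,3) by auto
  qed
  then have "0 < \<sigma>" unfolding \<sigma>_def using \<mu>_pos by (intro sum_pos2[of _ j]) (auto simp: less_imp_le)
  then have "2 \<le> n - d" using dominant total assms(3) by (cases "n - d = 1") auto
  define p where "p = real (n - d) * \<sigma> / (real (n - d) - 1)"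
  have "0 \<le> p" using \<open>0 < \<sigma>\<close> \<open>2 \<le> n - d\<close> by (simp add: p_def)
  have balance: "real (n - d) * \<sigma> = (real (n - d) - 1) * p"
    using \<open>2 \<le> n - d\<close> by (simp add: p_def)
  have "real (n - d) * \<sigma> < (real (n - d) - 1) * (\<Sum>i<n. svc_mean S i)"
    using dominant total by (simp add: algebra_simps)
  then have "p < (\<Sum>i<n. svc_mean S i)"
    using \<open>2 \<le> n - d\<close> by (simp add: p_def pos_divide_less_eq mult.commute)
  obtain A Amax where Amax: "\<forall>a\<in>set_pmf A. a \<le> Amax" and "measure_pmf.expectation A real = p"
    using bounded_nat_pmf_with_mean_exists[OF \<open>0 \<le> p\<close>] .
  moreover have "\<not> slq_positive_recurrent n d k A S"
    using slq_not_positive_recurrent_if_balance[OF assms(1,3) fin_S Amax \<open>l < n\<close> \<open>j < n\<close> \<open>j \<noteq> l\<close>]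
      balance \<open>measure_pmf.expectation A real = p\<close> by (simp add: \<sigma>_def)
  ultimately show thesis using that \<open>p < _\<close> by blast
qed

section \<open>The drift margin of the d longest queues\<close>

lemma scaled_lt_sum_min:
  fixes \<mu> :: "nat \<Rightarrow> real"
  assumes "0 < n" "c < real n" "\<forall>i<n. 0 < \<mu> i" "0 < x"
    and below: "c * x < (\<Sum>i<n. \<mu> i)"
    and no_dominant: "\<forall>i<n. c * \<mu> i \<le> (\<Sum>i<n. \<mu> i)"
  shows "c * x < (\<Sum>i<n. min (\<mu> i) x)"
proof -
  define T where "T = (\<Sum>i<n. \<mu> i)"
  have "0 < T" unfolding T_def using assms(1,3) by (intro sum_pos) auto
  define t where "t = c * x / T"
  have "t < 1" using below \<open>0 < T\<close> by (simp add: t_def T_def)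
  have t_less: "t * \<mu> i < \<mu> i" if "i < n" for i
    using \<open>t < 1\<close> assms(3) that by simp
  have t_le: "t * \<mu> i \<le> min (\<mu> i) x" if "i < n" for i
  proof -
    have "x * (c * \<mu> i) \<le> x * T"
      using no_dominant that \<open>0 < x\<close> by (intro mult_left_mono) (auto simp: T_def)
    then have "t * \<mu> i \<le> x"
      using \<open>0 < T\<close> by (simp add: t_def pos_divide_le_eq mult.commute mult.left_commute)
    then show ?thesis using t_less[OF that] by simp
  qed
  have "(\<Sum>i<n. t * \<mu> i) = t * T" by (simp add: T_def sum_distrib_left)
  then have sum_t: "(\<Sum>i<n. t * \<mu> i) = c * x" using \<open>0 < T\<close> by (simp add: t_def)
  show ?thesis
  proof (rule ccontr)
    assume "\<not> ?thesis"
    then have sum_eq: "(\<Sum>i<n. t * \<mu> i) = (\<Sum>i<n. min (\<mu> i) x)"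
      using sum_mono[of "{..<n}" "\<lambda>i. t * \<mu> i" "\<lambda>i. min (\<mu> i) x"] t_le sum_t by force
    have "min (\<mu> i) x = x" if "i < n" for i
      using sum_mono_inv[OF sum_eq, of i] t_le t_less[OF that] that by (auto simp: min_def)
    then have "(\<Sum>i<n. min (\<mu> i) x) = real n * x" by simp
    then show False using sum_eq sum_t \<open>0 < x\<close> \<open>c < real n\<close> by simp
  qed
qed

lemma longest_sets_Min_split:
  assumes "D \<in> longest_sets n d Q" "1 \<le> d"
  shows "i \<in> D \<Longrightarrow> Min (Q ` D) \<le> Q i"
    and "j \<in> {0..<n} - D \<Longrightarrow> Q j \<le> Min (Q ` D)"
proof -
  have "finite D" "D \<noteq> {}" using assms by (auto simp: longest_sets_def finite_subset)
  then show "i \<in> D \<Longrightarrow> Min (Q ` D) \<le> Q i" by simp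
  have "Min (Q ` D) \<in> Q ` D" using \<open>finite D\<close> \<open>D \<noteq> {}\<close> by simp
  then show "j \<in> {0..<n} - D \<Longrightarrow> Q j \<le> Min (Q ` D)"
    using assms(1) by (auto simp: longest_sets_def)
qed

text \<open>With \<open>m\<close> the shortest of the \<open>d\<close> longest queues, every queue that receives
  arrivals has length at most \<open>m\<close>.\<close>
lemma weighted_load_ge_longest_sets:
  fixes \<mu> :: "nat \<Rightarrow> real"
  assumes D: "D \<in> longest_sets n d Q" "1 \<le> d" and \<mu>_ge: "\<forall>i<n. \<mu>\<^sub>0 \<le> \<mu> i"
  defines "m \<equiv> real (Min (Q ` D))"
  shows "m * ((\<Sum>i<n. min (\<mu> i) \<theta>) - real (n - d) * \<theta>) + \<mu>\<^sub>0 * (\<Sum>i\<in>D. real (Q i) - m)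
      \<le> (\<Sum>i<n. \<mu> i * real (Q i)) - \<theta> * (\<Sum>i\<in>{0..<n}-D. real (Q i))"
proof -
  define R where "R = {0..<n} - D"
  have D_sub: "D \<subseteq> {..<n}" and "card R = n - d"
    using D card_complement[of D n d] by (auto simp: longest_sets_def R_def atLeast0LessThan)
  have m_le: "m \<le> real (Q i)" if "i \<in> D" for i
    using longest_sets_Min_split(1)[OF D that] by (simp add: m_def)
  have le_m: "real (Q j) \<le> m" if "j \<in> R" for j
    using longest_sets_Min_split(2)[OF D] that by (simp add: m_def R_def)
  have split: "(\<Sum>i<n. f i) = (\<Sum>i\<in>D. f i) + (\<Sum>i\<in>R. f i)" for f :: "nat \<Rightarrow> real"
    using D_sub by (simp add: R_def atLeast0LessThan sum.subset_diff[of D "{..<n}"] add.commute)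
  have on_D: "(\<Sum>i\<in>D. min (\<mu> i) \<theta> * m + \<mu>\<^sub>0 * (real (Q i) - m)) \<le> (\<Sum>i\<in>D. \<mu> i * real (Q i))"
  proof (intro sum_mono)
    fix i assume "i \<in> D"
    then have "min (\<mu> i) \<theta> * m \<le> \<mu> i * m" "\<mu>\<^sub>0 * (real (Q i) - m) \<le> \<mu> i * (real (Q i) - m)"
      using m_le \<mu>_ge D_sub by (auto intro!: mult_right_mono simp: m_def)
    then show "min (\<mu> i) \<theta> * m + \<mu>\<^sub>0 * (real (Q i) - m) \<le> \<mu> i * real (Q i)"
      by (simp add: algebra_simps)
  qed
  have on_R: "(\<Sum>j\<in>R. (min (\<mu> j) \<theta> - \<theta>) * m) \<le> (\<Sum>j\<in>R. (\<mu> j - \<theta>) * real (Q j))"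
  proof (intro sum_mono)
    fix j assume "j \<in> R"
    have "(min (\<mu> j) \<theta> - \<theta>) * m \<le> (min (\<mu> j) \<theta> - \<theta>) * real (Q j)"
      using le_m[OF \<open>j \<in> R\<close>] by (intro mult_left_mono_neg) auto
    also have "\<dots> \<le> (\<mu> j - \<theta>) * real (Q j)" by (intro mult_right_mono) auto
    finally show "(min (\<mu> j) \<theta> - \<theta>) * m \<le> (\<mu> j - \<theta>) * real (Q j)" .
  qed
  have "m * ((\<Sum>i<n. min (\<mu> i) \<theta>) - real (n - d) * \<theta>) + \<mu>\<^sub>0 * (\<Sum>i\<in>D. real (Q i) - m)
      = (\<Sum>i\<in>D. min (\<mu> i) \<theta> * m + \<mu>\<^sub>0 * (real (Q i) - m)) + (\<Sum>j\<in>R. (min (\<mu> j) \<theta> - \<theta>) * m)"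
    using \<open>card R = n - d\<close>
    by (simp add: split[of "\<lambda>i. min (\<mu> i) \<theta>"] sum.distrib sum_distrib_left sum_distrib_right
        sum_subtractf algebra_simps)
  also have "(\<Sum>i<n. \<mu> i * real (Q i)) - \<theta> * (\<Sum>i\<in>{0..<n}-D. real (Q i))
      = (\<Sum>i\<in>D. \<mu> i * real (Q i)) + (\<Sum>j\<in>R. (\<mu> j - \<theta>) * real (Q j))"
    by (simp add: split[of "\<lambda>i. \<mu> i * real (Q i)"] R_def sum_distrib_left left_diff_distrib sum_subtractf)
  ultimately show ?thesis using on_D on_R by linarith
qed

lemma sum_le_longest_sets:
  assumes D: "D \<in> longest_sets n d Q" "1 \<le> d"
  defines "m \<equiv> real (Min (Q ` D))"
  shows "(\<Sum>i<n. real (Q i)) \<le> (\<Sum>i\<in>D. real (Q i) - m) + real n * m"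
proof -
  define R where "R = {0..<n} - D"
  have D_sub: "D \<subseteq> {..<n}" and "card D = d" and "card R = n - d" and "d \<le> n"
    using D card_complement[of D n d] card_mono[of "{..<n}" D]
    by (auto simp: longest_sets_def R_def atLeast0LessThan)
  have "(\<Sum>i\<in>R. real (Q i)) \<le> (\<Sum>i\<in>R. m)"
    using longest_sets_Min_split(2)[OF D] by (intro sum_mono) (auto simp: m_def R_def)
  moreover have "(\<Sum>i<n. real (Q i)) = (\<Sum>i\<in>D. real (Q i)) + (\<Sum>i\<in>R. real (Q i))"
    using D_sub by (simp add: R_def atLeast0LessThan sum.subset_diff[of D "{..<n}"] add.commute)
  ultimately show ?thesis
    using \<open>card D = d\<close> \<open>card R = n - d\<close> \<open>d \<le> n\<close> by (simp add: sum_subtractf of_nat_diff algebra_simps)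
qed

text \<open>The threshold \<open>\<theta>\<close> is the mean arrival rate per queue receiving arrivals, slightly
  inflated so that \<open>(n - d) \<theta>\<close> still lies below the total service rate.\<close>
lemma exists_drift_margin:
  fixes \<mu> :: "nat \<Rightarrow> real"
  assumes "1 \<le> d" "d < n" "\<forall>i<n. 0 < \<mu> i" "0 \<le> p" "p < (\<Sum>i<n. \<mu> i)"
    and no_dominant: "\<forall>i<n. real (n - d) * \<mu> i \<le> (\<Sum>i<n. \<mu> i)"
  obtains \<theta> \<delta> where "0 < \<delta>" "p \<le> real (n - d) * \<theta>"
    "\<forall>Q. \<forall>D\<in>longest_sets n d Q. \<delta> * (\<Sum>i<n. real (Q i))
        \<le> (\<Sum>i<n. \<mu> i * real (Q i)) - \<theta> * (\<Sum>i\<in>{0..<n}-D. real (Q i))"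
proof
  define \<theta> where "\<theta> = (p + (\<Sum>i<n. \<mu> i)) / (2 * real (n - d))"
  have \<theta>: "real (n - d) * \<theta> = (p + (\<Sum>i<n. \<mu> i)) / 2"
    using assms(2) by (simp add: \<theta>_def field_simps)
  then show "p \<le> real (n - d) * \<theta>" using assms(5) by simp
  have "0 < \<theta>" using assms(2,4,5) by (simp add: \<theta>_def)
  define \<gamma> where "\<gamma> = (\<Sum>i<n. min (\<mu> i) \<theta>) - real (n - d) * \<theta>"
  have "0 < \<gamma>"
    using scaled_lt_sum_min[OF _ _ assms(3) \<open>0 < \<theta>\<close> _ no_dominant] \<theta> assms(1,2,5)
    by (simp add: \<gamma>_def)
  define \<mu>\<^sub>0 where "\<mu>\<^sub>0 = Min (\<mu> ` {..<n})"
  have \<mu>_ge: "\<forall>i<n. \<mu>\<^sub>0 \<le> \<mu> i" by (simp add: \<mu>\<^sub>0_def)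
  have "\<mu>\<^sub>0 \<in> \<mu> ` {..<n}" using assms(2) unfolding \<mu>\<^sub>0_def by (intro Min_in) auto
  then have "0 < \<mu>\<^sub>0" using assms(3) by auto
  define \<delta> where "\<delta> = min (\<gamma> / real n) \<mu>\<^sub>0"
  show "0 < \<delta>" using \<open>0 < \<gamma>\<close> \<open>0 < \<mu>\<^sub>0\<close> assms(2) by (simp add: \<delta>_def)
  show "\<forall>Q. \<forall>D\<in>longest_sets n d Q. \<delta> * (\<Sum>i<n. real (Q i))
      \<le> (\<Sum>i<n. \<mu> i * real (Q i)) - \<theta> * (\<Sum>i\<in>{0..<n}-D. real (Q i))"
  proof (intro allI ballI)
    fix Q D assume D: "D \<in> longest_sets n d Q"
    define m where "m = real (Min (Q ` D))"
    define E where "E = (\<Sum>i\<in>D. real (Q i) - m)"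
    have "0 \<le> E" "0 \<le> m"
      using longest_sets_Min_split(1)[OF D assms(1)] by (auto simp: E_def m_def intro: sum_nonneg)
    have "\<delta> * (\<Sum>i<n. real (Q i)) \<le> \<delta> * E + (\<delta> * real n) * m"
      using mult_left_mono[OF sum_le_longest_sets[OF D assms(1)], of \<delta>] \<open>0 < \<delta>\<close>
      by (simp add: E_def m_def algebra_simps)
    also have "\<dots> \<le> \<mu>\<^sub>0 * E + \<gamma> * m"
      using \<open>0 \<le> E\<close> \<open>0 \<le> m\<close> assms(2)
      by (intro add_mono mult_right_mono) (auto simp: \<delta>_def min_def field_simps)
    also have "\<dots> \<le> (\<Sum>i<n. \<mu> i * real (Q i)) - \<theta> * (\<Sum>i\<in>{0..<n}-D. real (Q i))"
      using weighted_load_ge_longest_sets[OF D assms(1) \<mu>_ge, of \<theta>]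
      by (simp add: E_def m_def \<gamma>_def algebra_simps)
    finally show "\<delta> * (\<Sum>i<n. real (Q i))
        \<le> (\<Sum>i<n. \<mu> i * real (Q i)) - \<theta> * (\<Sum>i\<in>{0..<n}-D. real (Q i))" .
  qed
qed

section \<open>Stability via a frame Lyapunov function\<close>

locale slq_drift_margin =
  fixes n d k :: nat and p \<theta> \<delta> :: real and \<mu> :: "nat \<Rightarrow> real"
  assumes k: "1 \<le> k" and d: "d < n" and p: "0 \<le> p" and \<mu>_pos: "\<forall>i<n. 0 < \<mu> i"
    and \<delta>: "0 < \<delta>" and p_le: "p \<le> real (n - d) * \<theta>"
    and margin: "\<forall>Q. \<forall>D\<in>longest_sets n d Q. \<delta> * (\<Sum>i<n. real (Q i))
        \<le> (\<Sum>i<n. \<mu> i * real (Q i)) - \<theta> * (\<Sum>i\<in>{0..<n}-D. real (Q i))"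
begin

text \<open>Up to a bounded error, \<open>slot_drift Q j - 2 \<delta> \<Sum>\<^sub>i Q\<^sub>i\<close> is the mean change of
  \<open>\<Sum>\<^sub>i Q\<^sub>i\<^sup>2\<close> in a slot routing to \<open>j\<close>.  \<open>pending_drift\<close> sums it, with \<open>Q\<close> frozen,
  over the slots left in the current frame; at the start of a frame this sum is \<open>\<le> 0\<close>
  by the margin inequality, so the frame-based Lyapunov function below has drift
  \<open>\<le> -2 \<delta> \<Sum>\<^sub>i Q\<^sub>i + const\<close> in every slot.\<close>
definition slot_drift :: "(nat \<Rightarrow> nat) \<Rightarrow> nat \<Rightarrow> real" where
  "slot_drift Q j =
     2 * p * real (Q j) - 2 * (\<Sum>i<n. \<mu> i * real (Q i)) + 2 * \<delta> * (\<Sum>i<n. real (Q i))"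

definition pending_drift :: "(nat \<Rightarrow> nat) \<Rightarrow> nat set \<Rightarrow> nat \<Rightarrow> nat \<Rightarrow> real" where
  "pending_drift Q D r m = (\<Sum>j\<in>round_remainder ({0..<n} - D) r. slot_drift Q j)
     + real (k - 1 - m) * (\<Sum>j\<in>{0..<n} - D. slot_drift Q j)"

definition drift_lip :: real where
  "drift_lip = 2 * (p + (\<Sum>i<n. \<mu> i) + \<delta> * real n)"

definition lyapunov :: "slq_state \<Rightarrow> real" where
  "lyapunov x = (case x of (Q, D, r, m) \<Rightarrow>
     (\<Sum>i<n. (real (Q i))\<^sup>2) + pending_drift Q D r m + (\<Sum>i<n. (2 * real (n + k * n) * \<mu> i)\<^sup>2))"

lemma pending_drift_ge:
  "- (2 * real (n + k * n)) * (\<Sum>i<n. \<mu> i * real (Q i)) \<le> pending_drift Q D r m"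
proof -
  define L where "L = (\<Sum>i<n. \<mu> i * real (Q i))"
  have "0 \<le> L" unfolding L_def using \<mu>_pos by (intro sum_nonneg) (simp add: less_imp_le)
  have "\<forall>j<n. - slot_drift Q j \<le> 2 * L"
  proof (intro allI impI)
    fix j
    have "0 \<le> p * real (Q j) + \<delta> * (\<Sum>i<n. real (Q i))"
      using p \<delta> by (intro add_nonneg_nonneg mult_nonneg_nonneg sum_nonneg) auto
    then show "- slot_drift Q j \<le> 2 * L" by (simp add: slot_drift_def L_def)
  qed
  then have bound: "- (real n * (2 * L)) \<le> (\<Sum>j\<in>X. slot_drift Q j)" if "X \<subseteq> {0..<n}" for X
    using sum_subset_atLeast0LessThan_le[OF that, of "\<lambda>j. - slot_drift Q j" "2 * L"] \<open>0 \<le> L\<close>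
    by (simp add: sum_negf)
  have "- (real k * (real n * (2 * L))) \<le> - (real (k - 1 - m) * (real n * (2 * L)))"
    using \<open>0 \<le> L\<close> by (intro le_imp_neg_le mult_right_mono) auto
  also have "\<dots> \<le> real (k - 1 - m) * (\<Sum>j\<in>{0..<n} - D. slot_drift Q j)"
    using mult_left_mono[OF bound[of "{0..<n} - D"], of "real (k - 1 - m)"] by simp
  moreover have "- (real n * (2 * L)) \<le> (\<Sum>j\<in>round_remainder ({0..<n} - D) r. slot_drift Q j)"
    by (rule bound) (auto simp: round_remainder_def)
  ultimately have "- (real n * (2 * L)) + - (real k * (real n * (2 * L))) \<le> pending_drift Q D r m"
    unfolding pending_drift_def by linarith
  then show ?thesis by (simp add: L_def algebra_simps)
qed

lemma lyapunov_nonneg: "0 \<le> lyapunov x"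
proof -
  obtain Q D r m where x: "x = (Q, D, r, m)" by (cases x)
  define c where "c = 2 * real (n + k * n)"
  have "0 \<le> (\<Sum>i<n. (real (Q i) - c * \<mu> i)\<^sup>2 + c * \<mu> i * real (Q i))"
    using \<mu>_pos by (intro sum_nonneg add_nonneg_nonneg) (auto simp: c_def less_imp_le)
  also have "\<dots> = (\<Sum>i<n. (real (Q i))\<^sup>2 - c * (\<mu> i * real (Q i)) + (c * \<mu> i)\<^sup>2)"
    by (intro sum.cong) (simp_all add: power2_eq_square algebra_simps)
  also have "\<dots> = (\<Sum>i<n. (real (Q i))\<^sup>2) - c * (\<Sum>i<n. \<mu> i * real (Q i)) + (\<Sum>i<n. (c * \<mu> i)\<^sup>2)"
    by (simp add: sum.distrib sum_subtractf sum_distrib_left)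
  moreover have "- c * (\<Sum>i<n. \<mu> i * real (Q i)) \<le> pending_drift Q D r m"
    unfolding c_def by (rule pending_drift_ge)
  moreover have "lyapunov x = (\<Sum>i<n. (real (Q i))\<^sup>2) + pending_drift Q D r m + (\<Sum>i<n. (c * \<mu> i)\<^sup>2)"
    by (simp add: lyapunov_def x c_def)
  ultimately show ?thesis by linarith
qed

lemma abs_slot_drift_diff_le:
  assumes close: "\<forall>i<n. \<bar>real (Q' i) - real (Q i)\<bar> \<le> M" and "j < n"
  shows "\<bar>slot_drift Q' j - slot_drift Q j\<bar> \<le> drift_lip * M"
proof -
  have "0 \<le> M" using close \<open>j < n\<close> by (meson abs_ge_zero order_trans)
  have "\<bar>\<Sum>i<n. \<mu> i * (real (Q' i) - real (Q i))\<bar> \<le> (\<Sum>i<n. \<mu> i * M)"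
    using close \<mu>_pos
    by (intro order_trans[OF sum_abs] sum_mono) (auto simp: abs_mult intro!: mult_left_mono)
  moreover have "\<bar>\<Sum>i<n. real (Q' i) - real (Q i)\<bar> \<le> (\<Sum>i<n. M)"
    using close by (intro order_trans[OF sum_abs] sum_mono) auto
  moreover have "\<bar>real (Q' j) - real (Q j)\<bar> \<le> M" using close \<open>j < n\<close> by simp
  ultimately have "\<bar>2 * p * (real (Q' j) - real (Q j))\<bar> \<le> 2 * p * M"
    "\<bar>2 * (\<Sum>i<n. \<mu> i * (real (Q' i) - real (Q i)))\<bar> \<le> 2 * ((\<Sum>i<n. \<mu> i) * M)"
    "\<bar>2 * \<delta> * (\<Sum>i<n. real (Q' i) - real (Q i))\<bar> \<le> 2 * \<delta> * (real n * M)"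
    using p \<delta> by (auto simp: abs_mult sum_distrib_right intro!: mult_left_mono)
  moreover have "slot_drift Q' j - slot_drift Q j = 2 * p * (real (Q' j) - real (Q j))
      - 2 * (\<Sum>i<n. \<mu> i * (real (Q' i) - real (Q i))) + 2 * \<delta> * (\<Sum>i<n. real (Q' i) - real (Q i))"
    by (simp add: slot_drift_def sum_subtractf right_diff_distrib algebra_simps)
  moreover have "drift_lip * M = 2 * p * M + 2 * ((\<Sum>i<n. \<mu> i) * M) + 2 * \<delta> * (real n * M)"
    by (simp add: drift_lip_def algebra_simps)
  ultimately show ?thesis by (simp only: abs_le_iff) linarith
qed

lemma pending_drift_diff_le:
  assumes "\<forall>i<n. \<bar>real (Q' i) - real (Q i)\<bar> \<le> M"
  shows "pending_drift Q' D r m \<le> pending_drift Q D r m + real (n + k * n) * (drift_lip * M)"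
proof -
  have slot: "\<forall>j<n. slot_drift Q' j - slot_drift Q j \<le> drift_lip * M"
    using abs_slot_drift_diff_le[OF assms] abs_le_iff by blast
  have "0 \<le> drift_lip * M"
    using abs_slot_drift_diff_le[OF assms, of 0] d abs_ge_zero[of "slot_drift Q' 0 - slot_drift Q 0"]
    by linarith
  have bound: "(\<Sum>j\<in>X. slot_drift Q' j - slot_drift Q j) \<le> real n * (drift_lip * M)"
    if "X \<subseteq> {0..<n}" for X
    using sum_subset_atLeast0LessThan_le[OF that slot \<open>0 \<le> drift_lip * M\<close>] .
  have "real (k - 1 - m) * (\<Sum>j\<in>{0..<n} - D. slot_drift Q' j - slot_drift Q j)
      \<le> real (k - 1 - m) * (real n * (drift_lip * M))"
    using bound[of "{0..<n} - D"] by (intro mult_left_mono) auto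
  also have "\<dots> \<le> real k * (real n * (drift_lip * M))"
    using \<open>0 \<le> drift_lip * M\<close> by (intro mult_right_mono) auto
  moreover have "(\<Sum>j\<in>round_remainder ({0..<n} - D) r. slot_drift Q' j - slot_drift Q j)
      \<le> real n * (drift_lip * M)"
    by (rule bound) (auto simp: round_remainder_def)
  moreover have "pending_drift Q' D r m - pending_drift Q D r m
      = (\<Sum>j\<in>round_remainder ({0..<n} - D) r. slot_drift Q' j - slot_drift Q j)
        + real (k - 1 - m) * (\<Sum>j\<in>{0..<n} - D. slot_drift Q' j - slot_drift Q j)"
    by (simp add: pending_drift_def sum_subtractf right_diff_distrib)
  moreover have "real (n + k * n) * (drift_lip * M)
      = real n * (drift_lip * M) + real k * (real n * (drift_lip * M))"
    by (simp add: algebra_simps)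
  ultimately show ?thesis by linarith
qed

lemma sum_slot_drift_longest_sets_nonpos:
  assumes D: "D \<in> longest_sets n d Q"
  shows "(\<Sum>j\<in>{0..<n} - D. slot_drift Q j) \<le> 0"
proof -
  let ?R = "{0..<n} - D"
  define L where "L = (\<Sum>i<n. \<mu> i * real (Q i))"
  define W where "W = (\<Sum>i<n. real (Q i))"
  define W\<^sub>R where "W\<^sub>R = (\<Sum>j\<in>?R. real (Q j))"
  have "card ?R = n - d"
    using D card_complement by (auto simp: longest_sets_def)
  have "0 \<le> W\<^sub>R" unfolding W\<^sub>R_def by (intro sum_nonneg) auto
  have "\<delta> * W \<le> L - \<theta> * W\<^sub>R" using margin D by (simp add: L_def W_def W\<^sub>R_def)
  have "slot_drift Q j = 2 * p * real (Q j) + (2 * \<delta> * W - 2 * L)" for j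
    by (simp add: slot_drift_def L_def W_def)
  then have "(\<Sum>j\<in>?R. slot_drift Q j) = 2 * p * W\<^sub>R + real (n - d) * (2 * \<delta> * W - 2 * L)"
    using \<open>card ?R = n - d\<close> by (simp add: sum.distrib sum_distrib_left W\<^sub>R_def)
  also have "\<dots> \<le> 2 * p * W\<^sub>R + real (n - d) * (- 2 * \<theta> * W\<^sub>R)"
    using \<open>\<delta> * W \<le> L - \<theta> * W\<^sub>R\<close> by (intro add_left_mono mult_left_mono) auto
  also have "\<dots> = 2 * (p - real (n - d) * \<theta>) * W\<^sub>R" by (simp add: algebra_simps)
  also have "\<dots> \<le> 0"
    using mult_nonpos_nonneg[of "2 * (p - real (n - d) * \<theta>)" W\<^sub>R] p_le \<open>0 \<le> W\<^sub>R\<close> by simp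
  finally show ?thesis .
qed

lemma pending_drift_slot:
  assumes x: "(Q, D, r, m) \<in> slq_states n d k"
    and close: "\<forall>i<n. \<bar>real (arrive_serve n Q r a s i) - real (Q i)\<bar> \<le> M"
    and y: "y \<in> set_pmf (slq_slot n d k Q D r m a s)"
  obtains D' r' m' where "y = (arrive_serve n Q r a s, D', r', m')"
    "pending_drift (arrive_serve n Q r a s) D' r' m'
       \<le> pending_drift Q D r m - slot_drift Q r + real (n + k * n) * (drift_lip * M)"
proof -
  define Q' where "Q' = arrive_serve n Q r a s"
  let ?R = "{0..<n} - D"
  have r: "r \<in> ?R" and "m < k" using x by (auto simp: slq_states_def)
  have err: "pending_drift Q' D' r' m' \<le> pending_drift Q D' r' m' + real (n + k * n) * (drift_lip * M)"
    for D' r' m' using pending_drift_diff_le[OF close[folded Q'_def]] .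
  have "0 \<le> drift_lip * M"
    using abs_slot_drift_diff_le[OF close, of 0] d abs_ge_zero[of "slot_drift Q' 0 - slot_drift Q 0"]
    by (simp add: Q'_def)
  from less_imp_le[OF d] y show thesis
  proof (cases rule: set_pmf_slq_slotE)
    case next_in_round
    have "round_remainder ?R (Min {j\<in>?R. r < j}) = {j\<in>?R. r < j}"
      using next_in_round(1) by (intro round_remainder_next) auto
    then have "pending_drift Q D (Min {j\<in>?R. r < j}) m = pending_drift Q D r m - slot_drift Q r"
      using r by (simp add: pending_drift_def round_remainder_current)
    then show thesis
      using that next_in_round err[of D "Min {j\<in>?R. r < j}" m] by (simp add: Q'_def)
  next
    case next_round
    have "pending_drift Q D (Min ?R) (Suc m) = pending_drift Q D r m - slot_drift Q r"
      using r next_round \<open>m < k\<close>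
      by (simp add: pending_drift_def round_remainder_Min round_remainder_last of_nat_diff algebra_simps)
    then show thesis
      using that next_round err[of D "Min ?R" "Suc m"] by (simp add: Q'_def)
  next
    case (new_frame D')
    have "k - 1 - m = 0" using new_frame \<open>m < k\<close> by simp
    then have "pending_drift Q D r m = slot_drift Q r"
      using r new_frame by (simp add: pending_drift_def round_remainder_last)
    moreover have "pending_drift Q' D' (Min ({0..<n} - D')) 0 = real k * (\<Sum>j\<in>{0..<n} - D'. slot_drift Q' j)"
      using k by (simp add: pending_drift_def round_remainder_Min of_nat_diff algebra_simps)
    moreover have "real k * (\<Sum>j\<in>{0..<n} - D'. slot_drift Q' j) \<le> 0"
      using sum_slot_drift_longest_sets_nonpos new_frame(3) by (simp add: Q'_def mult_nonneg_nonpos)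
    moreover have "0 \<le> real (n + k * n) * (drift_lip * M)"
      using \<open>0 \<le> drift_lip * M\<close> by simp
    ultimately show thesis
      using that[of D' "Min ({0..<n} - D')" 0] new_frame by (simp add: Q'_def)
  qed
qed

lemma expectation_lyapunov_le:
  assumes p_eq: "p = measure_pmf.expectation A real" and \<mu>_eq: "\<forall>i<n. \<mu> i = svc_mean S i"
    and Amax: "\<forall>a\<in>set_pmf A. a \<le> Amax" and fin_S: "finite (set_pmf S)"
    and Smax: "\<forall>s\<in>set_pmf S. \<forall>i<n. s i \<le> Smax"
    and x: "(Q, D, r, m) \<in> slq_states n d k"
  defines "M \<equiv> real (Amax + Smax)"
  shows "measure_pmf.expectation (slq_step n d k A S (Q, D, r, m)) lyapunov
    \<le> lyapunov (Q, D, r, m) - 2 * \<delta> * (\<Sum>i<n. real (Q i))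
       + (real n * M\<^sup>2 + real (n + k * n) * (drift_lip * M))"
proof -
  have "r < n" using x by (auto simp: slq_states_def)
  define K where "K = (\<Sum>i<n. (2 * real (n + k * n) * \<mu> i)\<^sup>2)"
  let ?c0 = "(\<Sum>i<n. (real (Q i))\<^sup>2) + real n * M\<^sup>2 + pending_drift Q D r m - slot_drift Q r
    + real (n + k * n) * (drift_lip * M) + K"
  let ?c2 = "\<lambda>i. - 2 * real (Q i)"
  have "measure_pmf.expectation (slq_step n d k A S (Q, D, r, m)) lyapunov
      \<le> ?c0 + 2 * real (Q r) * measure_pmf.expectation A real + (\<Sum>i<n. ?c2 i * svc_mean S i)"
  proof (rule expectation_slq_step_le_affine[OF finite_set_pmf_bounded_nat[OF Amax] fin_S less_imp_le[OF d]])
    fix a s y assume "a \<in> set_pmf A" "s \<in> set_pmf S" and y: "y \<in> set_pmf (slq_slot n d k Q D r m a s)"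
    then have "a \<le> Amax" "\<forall>i<n. s i \<le> Smax" using Amax Smax by auto
    from pending_drift_slot[OF x arrive_serve_dist_le[OF this, folded M_def] y]
    obtain D' r' m' where "y = (arrive_serve n Q r a s, D', r', m')"
      and "pending_drift (arrive_serve n Q r a s) D' r' m'
        \<le> pending_drift Q D r m - slot_drift Q r + real (n + k * n) * (drift_lip * M)" .
    moreover have "(\<Sum>i<n. (real (arrive_serve n Q r a s i))\<^sup>2) \<le> (\<Sum>i<n. (real (Q i))\<^sup>2)
        + real n * M\<^sup>2 + 2 * real (Q r) * real a - 2 * (\<Sum>i<n. real (Q i) * real (s i))"
      using sum_squares_arrive_serve_le[OF \<open>a \<le> Amax\<close> \<open>\<forall>i<n. s i \<le> Smax\<close> \<open>r < n\<close>]
      by (simp add: M_def)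
    moreover have "(\<Sum>i<n. ?c2 i * real (s i)) = - 2 * (\<Sum>i<n. real (Q i) * real (s i))"
      by (simp add: sum_distrib_left mult.assoc)
    ultimately show "lyapunov y \<le> ?c0 + 2 * real (Q r) * real a + (\<Sum>i<n. ?c2 i * real (s i))"
      by (simp add: lyapunov_def K_def)
  qed
  also have "\<dots> = lyapunov (Q, D, r, m) - 2 * \<delta> * (\<Sum>i<n. real (Q i))
      + (real n * M\<^sup>2 + real (n + k * n) * (drift_lip * M))"
  proof -
    have "(\<Sum>i<n. ?c2 i * svc_mean S i) = (\<Sum>i<n. - 2 * (\<mu> i * real (Q i)))"
      using \<mu>_eq by (intro sum.cong) auto
    moreover have "measure_pmf.expectation A real = p" using p_eq by simp
    ultimately show ?thesis
      by (simp add: lyapunov_def K_def slot_drift_def sum_distrib_left sum_negf algebra_simps)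
  qed
  finally show ?thesis .
qed

end

lemma finite_slq_states_load_le: "finite {x \<in> slq_states n d k. (\<Sum>i<n. fst x i) \<le> B}"
proof (rule finite_subset)
  show "{x \<in> slq_states n d k. (\<Sum>i<n. fst x i) \<le> B}
      \<subseteq> {Q. \<forall>i. (i \<in> {..<n} \<longrightarrow> Q i \<in> {..B}) \<and> (i \<notin> {..<n} \<longrightarrow> Q i = 0)}
          \<times> Pow {0..<n} \<times> {0..<n} \<times> {..<k}"
  proof
    fix x assume x: "x \<in> {x \<in> slq_states n d k. (\<Sum>i<n. fst x i) \<le> B}"
    obtain Q D r m where x_eq: "x = (Q, D, r, m)" by (cases x)
    have "Q i \<le> B" if "i < n" for i
      using member_le_sum[of i "{..<n}" Q] that x by (simp add: x_eq)
    then show "x \<in> {Q. \<forall>i. (i \<in> {..<n} \<longrightarrow> Q i \<in> {..B}) \<and> (i \<notin> {..<n} \<longrightarrow> Q i = 0)}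
          \<times> Pow {0..<n} \<times> {0..<n} \<times> {..<k}"
      using x by (auto simp: x_eq slq_states_def)
  qed
  show "finite ({Q. \<forall>i. (i \<in> {..<n} \<longrightarrow> Q i \<in> {..B}) \<and> (i \<notin> {..<n} \<longrightarrow> Q i = (0 :: nat))}
          \<times> Pow {0..<n} \<times> {0..<n} \<times> {..<k})"
    by (intro finite_cartesian_product finite_set_of_finite_funs) auto
qed

lemma slq_positive_recurrent_if_no_dominant_server:
  assumes "1 \<le> k" "1 \<le> d" "d < n"
    and Amax: "\<forall>a\<in>set_pmf A. a \<le> Amax" and fin_S: "finite (set_pmf S)"
    and Smax: "\<forall>s\<in>set_pmf S. \<forall>i<n. s i \<le> Smax"
    and \<mu>_pos: "\<forall>i<n. 0 < svc_mean S i"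
    and load: "measure_pmf.expectation A real < (\<Sum>i<n. svc_mean S i)"
    and no_dominant: "\<forall>i<n. real (n - d) * svc_mean S i \<le> (\<Sum>i<n. svc_mean S i)"
  shows "slq_positive_recurrent n d k A S"
proof -
  define p where "p = measure_pmf.expectation A real"
  have "0 \<le> p" by (simp add: p_def)
  obtain \<theta> \<delta> where "0 < \<delta>" "p \<le> real (n - d) * \<theta>"
    and margin: "\<forall>Q. \<forall>D\<in>longest_sets n d Q. \<delta> * (\<Sum>i<n. real (Q i))
        \<le> (\<Sum>i<n. svc_mean S i * real (Q i)) - \<theta> * (\<Sum>i\<in>{0..<n}-D. real (Q i))"
    using exists_drift_margin[OF assms(2,3) \<mu>_pos \<open>0 \<le> p\<close> load[folded p_def] no_dominant] .
  interpret slq_drift_margin n d k p \<theta> \<delta> "svc_mean S"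
    using assms \<open>0 \<le> p\<close> \<open>0 < \<delta>\<close> \<open>p \<le> real (n - d) * \<theta>\<close> margin by unfold_locales auto
  define M where "M = real (Amax + Smax)"
  define err where "err = real n * M\<^sup>2 + real (n + k * n) * (drift_lip * M)"
  define B :: nat where "B = nat \<lceil>(err + 1) / (2 * \<delta>)\<rceil>"
  show ?thesis unfolding slq_positive_recurrent_def
  proof (rule positive_recurrent_chain_Foster[where U = lyapunov
        and C = "{x \<in> slq_states n d k. (\<Sum>i<n. fst x i) \<le> B}"])
    show "set_pmf (slq_step n d k A S x) \<subseteq> slq_states n d k" if "x \<in> slq_states n d k" for x
      using slq_step_closed[OF assms(3,1) that] .
    show "finite (set_pmf (slq_step n d k A S x))" for x
      using finite_set_pmf_slq_step[OF finite_set_pmf_bounded_nat[OF Amax] fin_S] assms(3) by simp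
    show "0 \<le> lyapunov x" for x by (rule lyapunov_nonneg)
    show "finite {x \<in> slq_states n d k. (\<Sum>i<n. fst x i) \<le> B}" by (rule finite_slq_states_load_le)
  next
    fix x assume x: "x \<in> slq_states n d k" and "x \<notin> {x \<in> slq_states n d k. (\<Sum>i<n. fst x i) \<le> B}"
    obtain Q D r m where x_eq: "x = (Q, D, r, m)" by (cases x)
    have "real B + 1 \<le> (\<Sum>i<n. real (Q i))"
      using \<open>x \<notin> _\<close> x by (simp add: x_eq not_le flip: of_nat_sum)
    moreover have "(err + 1) / (2 * \<delta>) \<le> real B" unfolding B_def by linarith
    then have "err + 1 \<le> 2 * \<delta> * real B"
      using \<open>0 < \<delta>\<close> by (simp add: pos_divide_le_eq mult.commute)
    ultimately have "err + 1 \<le> 2 * \<delta> * (\<Sum>i<n. real (Q i))"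
      using mult_left_mono[of "real B + 1" "\<Sum>i<n. real (Q i)" "2 * \<delta>"] \<open>0 < \<delta>\<close>
      by (simp add: algebra_simps)
    then show "measure_pmf.expectation (slq_step n d k A S x) lyapunov \<le> lyapunov x - 1"
      using expectation_lyapunov_le[OF p_def _ Amax fin_S Smax x[unfolded x_eq]]
      by (simp add: x_eq err_def M_def)
  qed auto
qed

section \<open>The stability region\<close>

lemma mult_Max_le_iff:
  fixes f :: "'a \<Rightarrow> real"
  assumes "finite I" "I \<noteq> {}" "0 \<le> c"
  shows "c * Max (f ` I) \<le> T \<longleftrightarrow> (\<forall>i\<in>I. c * f i \<le> T)"
proof
  assume "c * Max (f ` I) \<le> T"
  then show "\<forall>i\<in>I. c * f i \<le> T"
    using assms by (meson Max_ge finite_imageI image_eqI mult_left_mono order_trans)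
next
  assume "\<forall>i\<in>I. c * f i \<le> T"
  moreover have "Max (f ` I) \<in> f ` I" using assms by simp
  ultimately show "c * Max (f ` I) \<le> T" by auto
qed

text \<open>Only the services of the servers \<open>i < n\<close> enter the dynamics; discarding the others
  makes a bounded service law finitely supported.\<close>
lemma finite_service_law_exists:
  assumes Smax: "\<forall>s\<in>set_pmf S. \<forall>i<n. s i \<le> Smax"
  obtains S' where "finite (set_pmf S')" "\<forall>s\<in>set_pmf S'. \<forall>i<n. s i \<le> Smax"
    "\<forall>i<n. svc_mean S' i = svc_mean S i"
    "\<forall>d k A. slq_positive_recurrent n d k A S' = slq_positive_recurrent n d k A S"
proof
  define restrict where "restrict s = (\<lambda>i. if i < n then s i else 0)" for s :: "nat \<Rightarrow> nat"
  define S' where "S' = map_pmf restrict S"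
  have "set_pmf S' \<subseteq> {s. \<forall>i. (i \<in> {..<n} \<longrightarrow> s i \<in> {..Smax}) \<and> (i \<notin> {..<n} \<longrightarrow> s i = 0)}"
    using Smax by (auto simp: S'_def restrict_def)
  then show "finite (set_pmf S')"
    by (rule finite_subset) (intro finite_set_of_finite_funs; auto)
  show "\<forall>s\<in>set_pmf S'. \<forall>i<n. s i \<le> Smax" using Smax by (auto simp: S'_def restrict_def)
  show "\<forall>i<n. svc_mean S' i = svc_mean S i" by (simp add: S'_def svc_mean_def restrict_def)
  have "arrive_serve n Q r a (restrict s) = arrive_serve n Q r a s" for Q r a s
    by (simp add: arrive_serve_def restrict_def fun_eq_iff)
  then have "slq_step n d k A S' = slq_step n d k A S" for d k A
    by (intro ext, case_tac x) (simp add: slq_step_eq_bind S'_def bind_map_pmf slq_slot_def)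
  then show "\<forall>d k A. slq_positive_recurrent n d k A S' = slq_positive_recurrent n d k A S"
    by (simp add: slq_positive_recurrent_def)
qed

lemma slq_positive_recurrent_all_loads_if_no_dominant_server:
  assumes "1 \<le> k" "1 \<le> d" "d < n" and Smax: "\<forall>s\<in>set_pmf S. \<forall>i<n. s i \<le> Smax"
    and \<mu>_pos: "\<forall>i<n. 0 < svc_mean S i"
    and no_dominant: "\<forall>i<n. real (n - d) * svc_mean S i \<le> (\<Sum>l<n. svc_mean S l)"
  shows "\<forall>A :: nat pmf. (\<exists>Amax. \<forall>a\<in>set_pmf A. a \<le> Amax) \<and>
      measure_pmf.expectation A real < (\<Sum>l<n. svc_mean S l) \<longrightarrow> slq_positive_recurrent n d k A S"
proof (intro allI impI, elim conjE exE)
  fix A :: "nat pmf" and Amax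
  assume "\<forall>a\<in>set_pmf A. a \<le> Amax" "measure_pmf.expectation A real < (\<Sum>l<n. svc_mean S l)"
  obtain S' where "finite (set_pmf S')" "\<forall>s\<in>set_pmf S'. \<forall>i<n. s i \<le> Smax"
    and mean: "\<forall>i<n. svc_mean S' i = svc_mean S i"
    and same: "\<forall>d k A. slq_positive_recurrent n d k A S' = slq_positive_recurrent n d k A S"
    using finite_service_law_exists[OF Smax] .
  with assms \<open>\<forall>a\<in>set_pmf A. a \<le> Amax\<close> \<open>measure_pmf.expectation A real < _\<close>
  have "slq_positive_recurrent n d k A S'"
    by (intro slq_positive_recurrent_if_no_dominant_server) simp_all
  then show "slq_positive_recurrent n d k A S" using same by simp
qed

lemma slq_not_positive_recurrent_some_load_if_dominant_server:
  assumes "1 \<le> k" "1 \<le> d" "d < n" and Smax: "\<forall>s\<in>set_pmf S. \<forall>i<n. s i \<le> Smax"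
    and \<mu>_pos: "\<forall>i<n. 0 < svc_mean S i"
    and "l < n" and dominant: "(\<Sum>i<n. svc_mean S i) < real (n - d) * svc_mean S l"
  shows "\<exists>A :: nat pmf. (\<exists>Amax. \<forall>a\<in>set_pmf A. a \<le> Amax) \<and>
      measure_pmf.expectation A real < (\<Sum>l<n. svc_mean S l) \<and> \<not> slq_positive_recurrent n d k A S"
proof -
  obtain S' where fin: "finite (set_pmf S')" and "\<forall>s\<in>set_pmf S'. \<forall>i<n. s i \<le> Smax"
    and mean: "\<forall>i<n. svc_mean S' i = svc_mean S i"
    and same: "\<forall>d k A. slq_positive_recurrent n d k A S' = slq_positive_recurrent n d k A S"
    using finite_service_law_exists[OF Smax] .
  have "\<forall>i<n. 0 < svc_mean S' i" "(\<Sum>i<n. svc_mean S' i) < real (n - d) * svc_mean S' l"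
    using \<mu>_pos dominant mean \<open>l < n\<close> by simp_all
  from slq_not_positive_recurrent_if_dominant_server[OF assms(1-3) fin this(1) \<open>l < n\<close> this(2)]
  obtain A Amax where "\<forall>a\<in>set_pmf A. a \<le> Amax"
    "measure_pmf.expectation A real < (\<Sum>i<n. svc_mean S' i)" "\<not> slq_positive_recurrent n d k A S'" .
  then show ?thesis using mean same by auto
qed

theorem corollary1:
  fixes n d k :: nat and S :: "(nat \<Rightarrow> nat) pmf"
  assumes "1 \<le> k" and "1 \<le> d" and "d < n"
    and "\<exists>Smax. \<forall>s\<in>set_pmf S. \<forall>i<n. s i \<le> Smax"
    and "\<forall>i<n. svc_mean S i > 0"
  shows "(\<forall>A :: nat pmf. (\<exists>Amax. \<forall>a\<in>set_pmf A. a \<le> Amax) \<and>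
              measure_pmf.expectation A real < (\<Sum>l<n. svc_mean S l)
            \<longrightarrow> slq_positive_recurrent n d k A S)
         \<longleftrightarrow> (\<Sum>l<n. svc_mean S l) \<ge> real (n - d) * Max (svc_mean S ` {..<n})"
proof -
  obtain Smax where Smax: "\<forall>s\<in>set_pmf S. \<forall>i<n. s i \<le> Smax" using assms(4) by blast
  have no_dominant_iff: "real (n - d) * Max (svc_mean S ` {..<n}) \<le> (\<Sum>l<n. svc_mean S l)
      \<longleftrightarrow> (\<forall>l<n. real (n - d) * svc_mean S l \<le> (\<Sum>l<n. svc_mean S l))"
    using mult_Max_le_iff[of "{..<n}" "real (n - d)" "svc_mean S"] assms(3) by auto
  show ?thesis (is "?stable \<longleftrightarrow> _")
    unfolding no_dominant_iff
  proof
    assume ?stable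
    show "\<forall>l<n. real (n - d) * svc_mean S l \<le> (\<Sum>l<n. svc_mean S l)"
    proof (intro allI impI, rule ccontr)
      fix l assume "l < n" "\<not> real (n - d) * svc_mean S l \<le> (\<Sum>l<n. svc_mean S l)"
      with slq_not_positive_recurrent_some_load_if_dominant_server[OF assms(1-3) Smax assms(5)]
      show False using \<open>?stable\<close> by (auto simp: not_le)
    qed
  qed (rule slq_positive_recurrent_all_loads_if_no_dominant_server[OF assms(1-3) Smax assms(5)])
qed

end
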